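(* Let $H_1<G_1$ and $H_2<G_2$ be groups and $K_1,K_2$ groups. If $H_1<G_1$ is relatively sofic over $K_1$ and $H_2<G_2$ is relatively sofic over $K_2$, then $H_1\times H_2<G_1\times G_2$ is relatively sofic over $K_1\times K_2$.
   Context: $H<G$ is relatively sofic over a group $K$ if there exist a sequence of inclusions of groups $(H_i<G_i)_{i\in\mathbb N}$ with all $G_i$ sofic and all $H_i$ amenable, a free ultrafilter $\omega$ on $\mathbb N$, and an embedding $\pi:G\to\prod_\omega(G_i\times K)$ into the algebraic ultraproduct such that $\pi(G)\cap\prod_\omega(H_i\times K)=\pi(H)$. The algebraic ultraproduct is $\prod_\omega L_i=(\prod_i L_i)/N$ with $N=\{(g_i):\{i:g_i=1\}\in\omega\}$. *)

theory Defs
  imports "HOL-Algebra.Algebra"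
begin

definition free_ultrafilter :: "nat set set \<Rightarrow> bool" where
  "free_ultrafilter U \<longleftrightarrow>
     UNIV \<in> U \<and> {} \<notin> U \<and>
     (\<forall>A B. A \<in> U \<longrightarrow> A \<subseteq> B \<longrightarrow> B \<in> U) \<and>
     (\<forall>A B. A \<in> U \<longrightarrow> B \<in> U \<longrightarrow> A \<inter> B \<in> U) \<and>
     (\<forall>A. A \<in> U \<or> - A \<in> U) \<and>
     (\<forall>A. finite A \<longrightarrow> A \<notin> U)"

definition amenable :: "('a, 'b) monoid_scheme \<Rightarrow> bool" where
  "amenable G \<longleftrightarrow> (\<exists>m :: 'a set \<Rightarrow> real.
     (\<forall>A. A \<subseteq> carrier G \<longrightarrow> 0 \<le> m A) \<and>
     m (carrier G) = 1 \<and>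
     (\<forall>A B. A \<subseteq> carrier G \<longrightarrow> B \<subseteq> carrier G \<longrightarrow> A \<inter> B = {} \<longrightarrow> m (A \<union> B) = m A + m B) \<and>
     (\<forall>g A. g \<in> carrier G \<longrightarrow> A \<subseteq> carrier G \<longrightarrow> m (g <#\<^bsub>G\<^esub> A) = m A))"

definition hamming :: "nat \<Rightarrow> (nat \<Rightarrow> nat) \<Rightarrow> (nat \<Rightarrow> nat) \<Rightarrow> real" where
  "hamming n \<sigma> \<tau> = real (card {i. i < n \<and> \<sigma> i \<noteq> \<tau> i}) / real n"

definition sofic :: "('a, 'b) monoid_scheme \<Rightarrow> bool" where
  "sofic G \<longleftrightarrow> (\<forall>F \<epsilon>. finite F \<longrightarrow> F \<subseteq> carrier G \<longrightarrow> (\<epsilon>::real) > 0 \<longrightarrow>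
     (\<exists>(n::nat) (\<phi> :: 'a \<Rightarrow> nat \<Rightarrow> nat). n > 0 \<and>
        (\<forall>g \<in> carrier G. \<phi> g permutes {..<n}) \<and>
        \<phi> \<one>\<^bsub>G\<^esub> = id \<and>
        (\<forall>g\<in>F. \<forall>h\<in>F. hamming n (\<phi> (g \<otimes>\<^bsub>G\<^esub> h)) (\<phi> g \<circ> \<phi> h) < \<epsilon>) \<and>
        (\<forall>g\<in>F. g \<noteq> \<one>\<^bsub>G\<^esub> \<longrightarrow> hamming n (\<phi> g) id > 1 - \<epsilon>)))"

definition prodgrp :: "(nat \<Rightarrow> ('a, 'b) monoid_scheme) \<Rightarrow> (nat \<Rightarrow> 'a) monoid" where
  "prodgrp L = \<lparr> carrier = Pi UNIV (\<lambda>i. carrier (L i)),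
                 Group.monoid.mult = (\<lambda>x y i. x i \<otimes>\<^bsub>L i\<^esub> y i),
                 Group.monoid.one = (\<lambda>i. \<one>\<^bsub>L i\<^esub>) \<rparr>"

definition ultraN :: "nat set set \<Rightarrow> (nat \<Rightarrow> ('a, 'b) monoid_scheme) \<Rightarrow> (nat \<Rightarrow> 'a) set" where
  "ultraN U L = {x \<in> carrier (prodgrp L). {i. x i = \<one>\<^bsub>L i\<^esub>} \<in> U}"

definition ultraprod :: "nat set set \<Rightarrow> (nat \<Rightarrow> ('a, 'b) monoid_scheme) \<Rightarrow> ((nat \<Rightarrow> 'a) set) monoid" where
  "ultraprod U L = prodgrp L Mod ultraN U L"

definition ultrasub :: "nat set set \<Rightarrow> (nat \<Rightarrow> ('a, 'b) monoid_scheme) \<Rightarrow> (nat \<Rightarrow> 'a set) \<Rightarrow> ((nat \<Rightarrow> 'a) set) set" where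
  "ultrasub U L S = (\<lambda>x. ultraN U L #>\<^bsub>prodgrp L\<^esub> x) ` Pi UNIV S"

text \<open>The witnessing groups G_i live in the type 'c (given via TYPE('c)).\<close>
definition rel_sofic_over :: "'c itself \<Rightarrow> 'a set \<Rightarrow> ('a, 'b) monoid_scheme \<Rightarrow> ('k, 'm) monoid_scheme \<Rightarrow> bool" where
  "rel_sofic_over _ H G K \<longleftrightarrow>
    (\<exists>(Gs :: nat \<Rightarrow> 'c monoid) (Hs :: nat \<Rightarrow> 'c set) U \<pi>.
       (\<forall>i. group (Gs i) \<and> subgroup (Hs i) (Gs i) \<and> sofic (Gs i) \<and>
            amenable ((Gs i)\<lparr>carrier := Hs i\<rparr>)) \<and>
       free_ultrafilter U \<and>
       \<pi> \<in> hom G (ultraprod U (\<lambda>i. Gs i \<times>\<times> K)) \<and>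
       inj_on \<pi> (carrier G) \<and>
       \<pi> ` carrier G \<inter> ultrasub U (\<lambda>i. Gs i \<times>\<times> K) (\<lambda>i. Hs i \<times> carrier K) = \<pi> ` H)"

end

(* Let H1 < G1 be witnessed by pairs H1_i < G1_i (amenable in sofic), an ultrafilter U1 and an
   embedding of G1 into the ultraproduct of the G1_i x K1 that cuts out H1, and similarly for
   H2 < G2.  For the product take the pairs H1_i x H2_j < G1_i x G2_j, indexed by pairs (i, j),
   with the product ultrafilter U1 x U2.  These pairs are again admissible: a direct product of
   sofic groups is sofic (tensor the sofic approximations), and a direct product of amenable
   groups is amenable (integrate the invariant mean of the second factor over the fibres against
   that of the first).  Representing both embeddings by sequences, the product embedding is built
   coordinatewise; a rectangle of index pairs is large for U1 x U2 exactly when both of its sides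
   are large, so almost multiplicativity, injectivity and the condition cutting out H1 x H2 all
   transfer. *)

theory Submission
  imports Defs
begin

section \<open>Free ultrafilters and their products\<close>

context
  fixes U :: "nat set set"
  assumes U: "free_ultrafilter U"
begin

lemma free_ultrafilter_UNIV: "UNIV \<in> U"
  using U unfolding free_ultrafilter_def by blast

lemma free_ultrafilter_empty: "{} \<notin> U"
  using U unfolding free_ultrafilter_def by blast

lemma free_ultrafilter_mono: "A \<in> U \<Longrightarrow> A \<subseteq> B \<Longrightarrow> B \<in> U"
  using U unfolding free_ultrafilter_def by blast

lemma free_ultrafilter_Int: "A \<in> U \<Longrightarrow> B \<in> U \<Longrightarrow> A \<inter> B \<in> U"
  using U unfolding free_ultrafilter_def by blast

lemma free_ultrafilter_finite: "finite A \<Longrightarrow> A \<notin> U"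
  using U unfolding free_ultrafilter_def by blast

lemma free_ultrafilter_Compl_iff: "- A \<in> U \<longleftrightarrow> A \<notin> U"
  using U free_ultrafilter_Int[of A "- A"] free_ultrafilter_empty
  unfolding free_ultrafilter_def by auto

end

text \<open>The product ultrafilter on pairs of indices, transported to \<nat> along prod_encode.\<close>
definition ultrafilter_prod :: "nat set set \<Rightarrow> nat set set \<Rightarrow> nat set set" where
  "ultrafilter_prod U V = {A. {i. {j. prod_encode (i, j) \<in> A} \<in> V} \<in> U}"

lemma free_ultrafilter_prod:
  assumes U: "free_ultrafilter U" and V: "free_ultrafilter V"
  shows "free_ultrafilter (ultrafilter_prod U V)"
proof -
  define row where "row A i = {j. prod_encode (i, j) \<in> A}" for A i
  have mem: "A \<in> ultrafilter_prod U V \<longleftrightarrow> {i. row A i \<in> V} \<in> U" for A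
    by (simp add: ultrafilter_prod_def row_def)
  show ?thesis
    unfolding free_ultrafilter_def mem
  proof (intro conjI allI impI)
    show "{i. row UNIV i \<in> V} \<in> U"
      using free_ultrafilter_UNIV[OF U] free_ultrafilter_UNIV[OF V] by (simp add: row_def)
    show "{i. row {} i \<in> V} \<notin> U"
      using free_ultrafilter_empty[OF U] free_ultrafilter_empty[OF V] by (simp add: row_def)
  next
    fix A B assume "{i. row A i \<in> V} \<in> U" "A \<subseteq> B"
    moreover have "row A i \<subseteq> row B i" for i
      using \<open>A \<subseteq> B\<close> by (auto simp: row_def)
    then have "{i. row A i \<in> V} \<subseteq> {i. row B i \<in> V}"
      using free_ultrafilter_mono[OF V] by blast
    ultimately show "{i. row B i \<in> V} \<in> U"
      using free_ultrafilter_mono[OF U] by blast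
  next
    fix A B assume "{i. row A i \<in> V} \<in> U" "{i. row B i \<in> V} \<in> U"
    then have "{i. row A i \<in> V} \<inter> {i. row B i \<in> V} \<in> U"
      by (rule free_ultrafilter_Int[OF U])
    moreover have "{i. row A i \<in> V} \<inter> {i. row B i \<in> V} \<subseteq> {i. row (A \<inter> B) i \<in> V}"
      using free_ultrafilter_Int[OF V] by (auto simp: row_def Collect_conj_eq)
    ultimately show "{i. row (A \<inter> B) i \<in> V} \<in> U"
      using free_ultrafilter_mono[OF U] by blast
  next
    fix A
    have "{i. row (- A) i \<in> V} = - {i. row A i \<in> V}"
      using free_ultrafilter_Compl_iff[OF V] by (auto simp: row_def Collect_neg_eq)
    then show "{i. row A i \<in> V} \<in> U \<or> {i. row (- A) i \<in> V} \<in> U"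
      using free_ultrafilter_Compl_iff[OF U] by auto
  next
    fix A :: "nat set" assume "finite A"
    then have "finite (row A i)" for i
      using finite_vimageI[of A "\<lambda>j. prod_encode (i, j)"] by (simp add: row_def vimage_def inj_def)
    then have "{i. row A i \<in> V} = {}"
      using free_ultrafilter_finite[OF V] by auto
    then show "{i. row A i \<in> V} \<notin> U"
      using free_ultrafilter_empty[OF U] by simp
  qed
qed

lemma rectangle_in_ultrafilter_prod_iff:
  assumes U: "free_ultrafilter U" and V: "free_ultrafilter V"
  shows "{n. P (fst (prod_decode n)) \<and> Q (snd (prod_decode n))} \<in> ultrafilter_prod U V
     \<longleftrightarrow> {i. P i} \<in> U \<and> {j. Q j} \<in> V"
proof -
  have "{j. P i \<and> Q j} = (if P i then {j. Q j} else {})" for i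
    by auto
  then have "{i. {j. P i \<and> Q j} \<in> V} = (if {j. Q j} \<in> V then {i. P i} else {})"
    using free_ultrafilter_empty[OF V] by auto
  then show ?thesis
    using free_ultrafilter_empty[OF U] by (simp add: ultrafilter_prod_def)
qed

section \<open>Algebraic ultraproducts\<close>

lemma prodgrp_eq_product_group: "prodgrp L = product_group UNIV L"
  by (simp add: prodgrp_def product_group_def PiE_UNIV_domain restrict_UNIV)

lemma carrier_prodgrp: "carrier (prodgrp L) = Pi UNIV (\<lambda>i. carrier (L i))"
  by (simp add: prodgrp_def)

lemma mult_prodgrp: "x \<otimes>\<^bsub>prodgrp L\<^esub> y = (\<lambda>i. x i \<otimes>\<^bsub>L i\<^esub> y i)"
  by (simp add: prodgrp_def)

lemma one_prodgrp: "\<one>\<^bsub>prodgrp L\<^esub> = (\<lambda>i. \<one>\<^bsub>L i\<^esub>)"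
  by (simp add: prodgrp_def)

lemma prodgrp_group: "(\<And>i. group (L i)) \<Longrightarrow> group (prodgrp L)"
  by (simp add: prodgrp_eq_product_group)

lemma inv_prodgrp:
  "(\<And>i. group (L i)) \<Longrightarrow> x \<in> carrier (prodgrp L) \<Longrightarrow>
    inv\<^bsub>prodgrp L\<^esub> x = (\<lambda>i. inv\<^bsub>L i\<^esub> (x i))"
  by (simp add: prodgrp_eq_product_group PiE_UNIV_domain restrict_UNIV)

abbreviation ultra_class :: "nat set set \<Rightarrow> (nat \<Rightarrow> ('a, 'b) monoid_scheme) \<Rightarrow> (nat \<Rightarrow> 'a) \<Rightarrow> (nat \<Rightarrow> 'a) set" where
  "ultra_class U L z \<equiv> ultraN U L #>\<^bsub>prodgrp L\<^esub> z"

context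
  fixes U :: "nat set set" and L :: "nat \<Rightarrow> ('a, 'b) monoid_scheme"
  assumes U: "free_ultrafilter U" and L: "\<And>i. group (L i)"
begin

interpretation P: group "prodgrp L"
  by (rule prodgrp_group[OF L])

lemma ultraN_subgroup: "subgroup (ultraN U L) (prodgrp L)"
proof (rule P.subgroupI)
  show "ultraN U L \<noteq> {}"
    using free_ultrafilter_UNIV[OF U]
    by (auto simp: ultraN_def one_prodgrp intro!: exI[of _ "\<one>\<^bsub>prodgrp L\<^esub>"])
next
  fix a assume "a \<in> ultraN U L"
  then have a: "a \<in> carrier (prodgrp L)" "{i. a i = \<one>\<^bsub>L i\<^esub>} \<in> U"
    by (simp_all add: ultraN_def)
  moreover have "{i. inv\<^bsub>L i\<^esub> (a i) = \<one>\<^bsub>L i\<^esub>} = {i. a i = \<one>\<^bsub>L i\<^esub>}"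
    using a(1) L by (simp add: carrier_prodgrp Pi_iff group.inv_eq_1_iff)
  ultimately show "inv\<^bsub>prodgrp L\<^esub> a \<in> ultraN U L"
    using P.inv_closed[OF a(1)] by (simp add: ultraN_def inv_prodgrp[OF L])
next
  fix a b assume a: "a \<in> ultraN U L" and b: "b \<in> ultraN U L"
  then have "{i. a i = \<one>\<^bsub>L i\<^esub>} \<inter> {i. b i = \<one>\<^bsub>L i\<^esub>} \<in> U"
    by (simp add: ultraN_def free_ultrafilter_Int[OF U])
  moreover have "{i. a i = \<one>\<^bsub>L i\<^esub>} \<inter> {i. b i = \<one>\<^bsub>L i\<^esub>}
      \<subseteq> {i. a i \<otimes>\<^bsub>L i\<^esub> b i = \<one>\<^bsub>L i\<^esub>}"
    using L by (auto simp: group.is_monoid)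
  moreover have "a \<otimes>\<^bsub>prodgrp L\<^esub> b \<in> carrier (prodgrp L)"
    using a b by (simp add: ultraN_def)
  ultimately show "a \<otimes>\<^bsub>prodgrp L\<^esub> b \<in> ultraN U L"
    using free_ultrafilter_mono[OF U] by (auto simp: ultraN_def mult_prodgrp)
qed (auto simp: ultraN_def)

lemma ultraN_normal: "ultraN U L \<lhd> prodgrp L"
proof (subst P.normal_inv_iff, intro conjI ultraN_subgroup ballI)
  fix x h assume x: "x \<in> carrier (prodgrp L)" and h: "h \<in> ultraN U L"
  have "{i. h i = \<one>\<^bsub>L i\<^esub>} \<subseteq>
      {i. x i \<otimes>\<^bsub>L i\<^esub> h i \<otimes>\<^bsub>L i\<^esub> inv\<^bsub>L i\<^esub> (x i) = \<one>\<^bsub>L i\<^esub>}"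
    using x L by (auto simp: carrier_prodgrp Pi_iff group.r_inv group.is_monoid)
  moreover have "x \<otimes>\<^bsub>prodgrp L\<^esub> h \<otimes>\<^bsub>prodgrp L\<^esub> inv\<^bsub>prodgrp L\<^esub> x \<in> carrier (prodgrp L)"
    using x h by (simp add: ultraN_def)
  ultimately show "x \<otimes>\<^bsub>prodgrp L\<^esub> h \<otimes>\<^bsub>prodgrp L\<^esub> inv\<^bsub>prodgrp L\<^esub> x \<in> ultraN U L"
    using x h free_ultrafilter_mono[OF U]
    by (auto simp: ultraN_def mult_prodgrp inv_prodgrp[OF L])
qed

lemma ultra_class_eq_iff:
  assumes z: "z \<in> carrier (prodgrp L)" and z': "z' \<in> carrier (prodgrp L)"
  shows "ultra_class U L z = ultra_class U L z' \<longleftrightarrow> {i. z i = z' i} \<in> U"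
proof -
  have "ultra_class U L z = ultra_class U L z' \<longleftrightarrow> z \<otimes>\<^bsub>prodgrp L\<^esub> inv\<^bsub>prodgrp L\<^esub> z' \<in> ultraN U L"
    using subgroup.rcos_module[OF ultraN_subgroup P.is_group z' z]
    by (metis P.rcos_self P.repr_independence ultraN_subgroup z z')
  also have "\<dots> \<longleftrightarrow> {i. z i = z' i} \<in> U"
  proof -
    have "{i. (z \<otimes>\<^bsub>prodgrp L\<^esub> inv\<^bsub>prodgrp L\<^esub> z') i = \<one>\<^bsub>L i\<^esub>} = {i. z i = z' i}"
      using z z' L by (simp add: mult_prodgrp inv_prodgrp carrier_prodgrp Pi_iff
          group.inv_solve_right' group.is_monoid)
    then show ?thesis
      using z z' by (simp add: ultraN_def)
  qed
  finally show ?thesis .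
qed

lemma ultra_class_mult:
  assumes "x \<in> carrier (prodgrp L)" and "y \<in> carrier (prodgrp L)"
  shows "ultra_class U L x \<otimes>\<^bsub>ultraprod U L\<^esub> ultra_class U L y
       = ultra_class U L (x \<otimes>\<^bsub>prodgrp L\<^esub> y)"
  using normal.rcos_sum[OF ultraN_normal assms] by (simp add: ultraprod_def FactGroup_def)

lemma carrier_ultraprod: "carrier (ultraprod U L) = ultra_class U L ` carrier (prodgrp L)"
  by (auto simp: ultraprod_def FactGroup_def RCOSETS_def)

lemma ultra_class_mem_ultrasub_iff:
  assumes S: "\<And>i. S i \<subseteq> carrier (L i)" "\<And>i. \<one>\<^bsub>L i\<^esub> \<in> S i"
    and z: "z \<in> carrier (prodgrp L)"
  shows "ultra_class U L z \<in> ultrasub U L S \<longleftrightarrow> {i. z i \<in> S i} \<in> U"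
proof
  assume "ultra_class U L z \<in> ultrasub U L S"
  then obtain w where w: "w \<in> Pi UNIV S" and "ultra_class U L z = ultra_class U L w"
    by (auto simp: ultrasub_def)
  moreover have "w \<in> carrier (prodgrp L)"
    using w S by (auto simp: carrier_prodgrp)
  ultimately have "{i. z i = w i} \<in> U"
    using ultra_class_eq_iff[OF z] by simp
  moreover have "{i. z i = w i} \<subseteq> {i. z i \<in> S i}"
    using w by auto
  ultimately show "{i. z i \<in> S i} \<in> U"
    using free_ultrafilter_mono[OF U] by blast
next
  assume A: "{i. z i \<in> S i} \<in> U"
  define w where "w i = (if z i \<in> S i then z i else \<one>\<^bsub>L i\<^esub>)" for i
  have w: "w \<in> Pi UNIV S"
    using S(2) by (simp add: w_def)
  then have wc: "w \<in> carrier (prodgrp L)"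
    using S(1) by (auto simp: carrier_prodgrp)
  have "{i. z i \<in> S i} \<subseteq> {i. z i = w i}"
    by (auto simp: w_def)
  then have "ultra_class U L z = ultra_class U L w"
    using A free_ultrafilter_mono[OF U] ultra_class_eq_iff[OF z wc] by blast
  then show "ultra_class U L z \<in> ultrasub U L S"
    using w by (auto simp: ultrasub_def)
qed

end

section \<open>Embeddings into ultraproducts, represented by sequences\<close>

text \<open>r represents an embedding of G into the ultraproduct through the quotient map; the last
  clause says that the embedding cuts out H.\<close>
definition rel_embedding_lift ::
  "nat set set \<Rightarrow> (nat \<Rightarrow> ('c, 'd) monoid_scheme) \<Rightarrow> (nat \<Rightarrow> 'c set) \<Rightarrow>
    ('a, 'b) monoid_scheme \<Rightarrow> 'a set \<Rightarrow> ('a \<Rightarrow> nat \<Rightarrow> 'c) \<Rightarrow> bool" where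
  "rel_embedding_lift U L S G H r \<longleftrightarrow>
     r \<in> carrier G \<rightarrow> carrier (prodgrp L) \<and>
     (\<forall>g\<in>carrier G. \<forall>h\<in>carrier G. {i. r (g \<otimes>\<^bsub>G\<^esub> h) i = r g i \<otimes>\<^bsub>L i\<^esub> r h i} \<in> U) \<and>
     (\<forall>g\<in>carrier G. \<forall>h\<in>carrier G. {i. r g i = r h i} \<in> U \<longrightarrow> g = h) \<and>
     (\<forall>g\<in>carrier G. {i. r g i \<in> S i} \<in> U \<longleftrightarrow> g \<in> H)"

context
  fixes U :: "nat set set" and L :: "nat \<Rightarrow> ('c, 'd) monoid_scheme" and S :: "nat \<Rightarrow> 'c set"
  assumes U: "free_ultrafilter U" and L: "\<And>i. group (L i)"
    and S: "\<And>i. S i \<subseteq> carrier (L i)" "\<And>i. \<one>\<^bsub>L i\<^esub> \<in> S i"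
begin

lemma rel_embedding_lift_imp_embedding:
  assumes G: "monoid G" and H: "H \<subseteq> carrier G" and r: "rel_embedding_lift U L S G H r"
  shows "(\<lambda>g. ultra_class U L (r g)) \<in> hom G (ultraprod U L)"
    and "inj_on (\<lambda>g. ultra_class U L (r g)) (carrier G)"
    and "(\<lambda>g. ultra_class U L (r g)) ` carrier G \<inter> ultrasub U L S = (\<lambda>g. ultra_class U L (r g)) ` H"
proof -
  have rc: "r g \<in> carrier (prodgrp L)" if "g \<in> carrier G" for g
    using r that by (auto simp: rel_embedding_lift_def)
  interpret P: group "prodgrp L"
    by (rule prodgrp_group[OF L])
  show "(\<lambda>g. ultra_class U L (r g)) \<in> hom G (ultraprod U L)"
  proof (rule homI)
    fix g h assume g: "g \<in> carrier G" and h: "h \<in> carrier G"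
    then have "{i. r (g \<otimes>\<^bsub>G\<^esub> h) i = (r g \<otimes>\<^bsub>prodgrp L\<^esub> r h) i} \<in> U"
      using r by (simp add: rel_embedding_lift_def mult_prodgrp)
    then show "ultra_class U L (r (g \<otimes>\<^bsub>G\<^esub> h)) = ultra_class U L (r g) \<otimes>\<^bsub>ultraprod U L\<^esub> ultra_class U L (r h)"
      using g h rc G by (simp add: ultra_class_mult[OF U L] ultra_class_eq_iff[OF U L] monoid.m_closed)
  qed (auto simp: carrier_ultraprod[OF U L] rc)
  show "inj_on (\<lambda>g. ultra_class U L (r g)) (carrier G)"
    using r rc by (auto simp: inj_on_def rel_embedding_lift_def ultra_class_eq_iff[OF U L])
  then show "(\<lambda>g. ultra_class U L (r g)) ` carrier G \<inter> ultrasub U L S = (\<lambda>g. ultra_class U L (r g)) ` H"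
    using r rc H by (auto simp: rel_embedding_lift_def ultra_class_mem_ultrasub_iff[OF U L S])
qed

lemma embedding_imp_rel_embedding_lift:
  assumes G: "monoid G" and H: "H \<subseteq> carrier G" and hom: "\<pi> \<in> hom G (ultraprod U L)"
    and inj: "inj_on \<pi> (carrier G)" and sub: "\<pi> ` carrier G \<inter> ultrasub U L S = \<pi> ` H"
  shows "\<exists>r. rel_embedding_lift U L S G H r"
proof -
  have "\<forall>g\<in>carrier G. \<exists>z\<in>carrier (prodgrp L). \<pi> g = ultra_class U L z"
    using hom by (auto simp: hom_def carrier_ultraprod[OF U L] Pi_iff image_iff)
  then obtain r where rc: "r \<in> carrier G \<rightarrow> carrier (prodgrp L)"
    and \<pi>: "\<And>g. g \<in> carrier G \<Longrightarrow> \<pi> g = ultra_class U L (r g)"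
    by (metis Pi_I)
  have "{i. r (g \<otimes>\<^bsub>G\<^esub> h) i = r g i \<otimes>\<^bsub>L i\<^esub> r h i} \<in> U"
    if g: "g \<in> carrier G" and h: "h \<in> carrier G" for g h
  proof -
    have "ultra_class U L (r (g \<otimes>\<^bsub>G\<^esub> h)) = \<pi> (g \<otimes>\<^bsub>G\<^esub> h)"
      using \<pi> monoid.m_closed[OF G g h] by simp
    also have "\<dots> = \<pi> g \<otimes>\<^bsub>ultraprod U L\<^esub> \<pi> h"
      using hom g h by (rule hom_mult)
    also have "\<dots> = ultra_class U L (r g \<otimes>\<^bsub>prodgrp L\<^esub> r h)"
      using \<pi> g h rc by (simp add: ultra_class_mult[OF U L] Pi_iff)
    finally have "ultra_class U L (r (g \<otimes>\<^bsub>G\<^esub> h)) = ultra_class U L (r g \<otimes>\<^bsub>prodgrp L\<^esub> r h)" .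
    moreover have "r (g \<otimes>\<^bsub>G\<^esub> h) \<in> carrier (prodgrp L)" "r g \<otimes>\<^bsub>prodgrp L\<^esub> r h \<in> carrier (prodgrp L)"
      using g h rc monoid.m_closed[OF G g h] group.is_monoid[OF prodgrp_group[OF L]]
      by (auto intro: monoid.m_closed)
    ultimately show ?thesis
      by (simp add: ultra_class_eq_iff[OF U L] mult_prodgrp)
  qed
  moreover have "g = h" if "g \<in> carrier G" "h \<in> carrier G" "{i. r g i = r h i} \<in> U" for g h
  proof -
    have "\<pi> g = \<pi> h"
      using that rc \<pi> ultra_class_eq_iff[OF U L, where z="r g" and z'="r h"] by (simp add: Pi_iff)
    then show "g = h"
      using inj that by (auto dest: inj_onD)
  qed
  moreover have "{i. r g i \<in> S i} \<in> U \<longleftrightarrow> g \<in> H" if "g \<in> carrier G" for g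
  proof -
    have "{i. r g i \<in> S i} \<in> U \<longleftrightarrow> \<pi> g \<in> ultrasub U L S"
      using that rc \<pi> by (simp add: ultra_class_mem_ultrasub_iff[OF U L S] Pi_iff)
    also have "\<dots> \<longleftrightarrow> \<pi> g \<in> \<pi> ` H"
      using that sub by blast
    also have "\<dots> \<longleftrightarrow> g \<in> H"
      using that H inj by (simp add: inj_on_image_mem_iff)
    finally show ?thesis .
  qed
  ultimately show ?thesis
    using rc by (auto simp: rel_embedding_lift_def)
qed

lemma ex_embedding_iff_ex_rel_embedding_lift:
  assumes G: "monoid G" and H: "H \<subseteq> carrier G"
  shows "(\<exists>\<pi>. \<pi> \<in> hom G (ultraprod U L) \<and> inj_on \<pi> (carrier G) \<and> \<pi> ` carrier G \<inter> ultrasub U L S = \<pi> ` H)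
    \<longleftrightarrow> (\<exists>r. rel_embedding_lift U L S G H r)"
proof
  assume "\<exists>\<pi>. \<pi> \<in> hom G (ultraprod U L) \<and> inj_on \<pi> (carrier G) \<and> \<pi> ` carrier G \<inter> ultrasub U L S = \<pi> ` H"
  then show "\<exists>r. rel_embedding_lift U L S G H r"
    using embedding_imp_rel_embedding_lift[OF G H] by (elim exE conjE)
next
  assume "\<exists>r. rel_embedding_lift U L S G H r"
  then obtain r where "rel_embedding_lift U L S G H r" ..
  from rel_embedding_lift_imp_embedding[OF G H this]
  show "\<exists>\<pi>. \<pi> \<in> hom G (ultraprod U L) \<and> inj_on \<pi> (carrier G) \<and> \<pi> ` carrier G \<inter> ultrasub U L S = \<pi> ` H"
    by blast
qed

end

text \<open>n encodes a pair (i, j) of indices; the components are regrouped to match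
  (G1 i \<times> G2 j) \<times> (K1 \<times> K2).\<close>
definition interleave :: "(nat \<Rightarrow> 'a \<times> 'b) \<Rightarrow> (nat \<Rightarrow> 'c \<times> 'd) \<Rightarrow> nat \<Rightarrow> ('a \<times> 'c) \<times> ('b \<times> 'd)" where
  "interleave x y n = (let i = fst (prod_decode n); j = snd (prod_decode n)
     in ((fst (x i), fst (y j)), (snd (x i), snd (y j))))"

lemma rel_embedding_lift_DirProd:
  assumes U1: "free_ultrafilter U1" and U2: "free_ultrafilter U2"
    and r1: "rel_embedding_lift U1 (\<lambda>i. A1 i \<times>\<times> K1) (\<lambda>i. B1 i \<times> carrier K1) G1 H1 r1"
    and r2: "rel_embedding_lift U2 (\<lambda>j. A2 j \<times>\<times> K2) (\<lambda>j. B2 j \<times> carrier K2) G2 H2 r2"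
  shows "rel_embedding_lift (ultrafilter_prod U1 U2)
     (\<lambda>n. (A1 (fst (prod_decode n)) \<times>\<times> A2 (snd (prod_decode n))) \<times>\<times> (K1 \<times>\<times> K2))
     (\<lambda>n. (B1 (fst (prod_decode n)) \<times> B2 (snd (prod_decode n))) \<times> carrier (K1 \<times>\<times> K2))
     (G1 \<times>\<times> G2) (H1 \<times> H2) (\<lambda>g. interleave (r1 (fst g)) (r2 (snd g)))"
proof -
  let ?U = "ultrafilter_prod U1 U2"
  note rect = rectangle_in_ultrafilter_prod_iff[OF U1 U2]
  have large: "T \<in> ?U" if "{i. P i} \<in> U1" "{j. Q j} \<in> U2"
    and "{n. P (fst (prod_decode n)) \<and> Q (snd (prod_decode n))} \<subseteq> T" for P Q T
    using that rect free_ultrafilter_mono[OF free_ultrafilter_prod[OF U1 U2]] by blast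
  have rc1: "r1 g i \<in> carrier (A1 i \<times>\<times> K1)" if "g \<in> carrier G1" for g i
    using r1 that by (auto simp: rel_embedding_lift_def carrier_prodgrp)
  have rc2: "r2 g j \<in> carrier (A2 j \<times>\<times> K2)" if "g \<in> carrier G2" for g j
    using r2 that by (auto simp: rel_embedding_lift_def carrier_prodgrp)
  show ?thesis
    unfolding rel_embedding_lift_def
  proof (intro conjI ballI impI Pi_I)
    fix g assume "g \<in> carrier (G1 \<times>\<times> G2)"
    then show "interleave (r1 (fst g)) (r2 (snd g)) \<in>
        carrier (prodgrp (\<lambda>n. (A1 (fst (prod_decode n)) \<times>\<times> A2 (snd (prod_decode n))) \<times>\<times> (K1 \<times>\<times> K2)))"
      using rc1 rc2 by (auto simp: carrier_prodgrp interleave_def Let_def mem_Times_iff)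
  next
    fix g h assume g: "g \<in> carrier (G1 \<times>\<times> G2)" and h: "h \<in> carrier (G1 \<times>\<times> G2)"
    then have "{i. r1 (fst g \<otimes>\<^bsub>G1\<^esub> fst h) i = r1 (fst g) i \<otimes>\<^bsub>A1 i \<times>\<times> K1\<^esub> r1 (fst h) i} \<in> U1"
      "{j. r2 (snd g \<otimes>\<^bsub>G2\<^esub> snd h) j = r2 (snd g) j \<otimes>\<^bsub>A2 j \<times>\<times> K2\<^esub> r2 (snd h) j} \<in> U2"
      using r1 r2 by (auto simp: rel_embedding_lift_def)
    then show "{n. interleave (r1 (fst (g \<otimes>\<^bsub>G1 \<times>\<times> G2\<^esub> h))) (r2 (snd (g \<otimes>\<^bsub>G1 \<times>\<times> G2\<^esub> h))) n =
        interleave (r1 (fst g)) (r2 (snd g)) n \<otimes>\<^bsub>(A1 (fst (prod_decode n)) \<times>\<times> A2 (snd (prod_decode n))) \<times>\<times> (K1 \<times>\<times> K2)\<^esub>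
        interleave (r1 (fst h)) (r2 (snd h)) n} \<in> ?U"
      by (rule large) (auto simp: interleave_def Let_def mult_DirProd')
  next
    fix g h assume g: "g \<in> carrier (G1 \<times>\<times> G2)" and h: "h \<in> carrier (G1 \<times>\<times> G2)"
      and eq: "{n. interleave (r1 (fst g)) (r2 (snd g)) n = interleave (r1 (fst h)) (r2 (snd h)) n} \<in> ?U"
    have "{n. interleave (r1 (fst g)) (r2 (snd g)) n = interleave (r1 (fst h)) (r2 (snd h)) n}
        = {n. r1 (fst g) (fst (prod_decode n)) = r1 (fst h) (fst (prod_decode n)) \<and>
              r2 (snd g) (snd (prod_decode n)) = r2 (snd h) (snd (prod_decode n))}"
      by (auto simp: interleave_def Let_def prod_eq_iff)
    then have "{i. r1 (fst g) i = r1 (fst h) i} \<in> U1" "{j. r2 (snd g) j = r2 (snd h) j} \<in> U2"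
      using eq rect[of "\<lambda>i. r1 (fst g) i = r1 (fst h) i" "\<lambda>j. r2 (snd g) j = r2 (snd h) j"] by simp_all
    then have "fst g = fst h" "snd g = snd h"
      using g h r1 r2 by (auto simp: rel_embedding_lift_def)
    then show "g = h"
      by (rule prod_eqI)
  next
    fix g assume g: "g \<in> carrier (G1 \<times>\<times> G2)"
    have "{n. interleave (r1 (fst g)) (r2 (snd g)) n \<in>
          (B1 (fst (prod_decode n)) \<times> B2 (snd (prod_decode n))) \<times> carrier (K1 \<times>\<times> K2)}
        = {n. r1 (fst g) (fst (prod_decode n)) \<in> B1 (fst (prod_decode n)) \<times> carrier K1 \<and>
              r2 (snd g) (snd (prod_decode n)) \<in> B2 (snd (prod_decode n)) \<times> carrier K2}"
      using g rc1 rc2 by (fastforce simp: interleave_def Let_def mem_Times_iff)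
    then have "{n. interleave (r1 (fst g)) (r2 (snd g)) n \<in>
          (B1 (fst (prod_decode n)) \<times> B2 (snd (prod_decode n))) \<times> carrier (K1 \<times>\<times> K2)} \<in> ?U
        \<longleftrightarrow> {i. r1 (fst g) i \<in> B1 i \<times> carrier K1} \<in> U1 \<and> {j. r2 (snd g) j \<in> B2 j \<times> carrier K2} \<in> U2"
      using rect[of "\<lambda>i. r1 (fst g) i \<in> B1 i \<times> carrier K1" "\<lambda>j. r2 (snd g) j \<in> B2 j \<times> carrier K2"]
      by simp
    also have "\<dots> \<longleftrightarrow> g \<in> H1 \<times> H2"
      using g r1 r2 by (auto simp: rel_embedding_lift_def mem_Times_iff)
    finally show "{n. interleave (r1 (fst g)) (r2 (snd g)) n \<in>
          (B1 (fst (prod_decode n)) \<times> B2 (snd (prod_decode n))) \<times> carrier (K1 \<times>\<times> K2)} \<in> ?U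
        \<longleftrightarrow> g \<in> H1 \<times> H2" .
  qed
qed

section \<open>Direct products of sofic groups\<close>

lemma add_mult_less_mult:
  fixes a b n1 n2 :: nat
  assumes "a < n1" "b < n2"
  shows "a + n1 * b < n1 * n2"
proof -
  have "a + n1 * b < n1 * Suc b"
    using assms(1) by simp
  also have "\<dots> \<le> n1 * n2"
    using assms(2) by (intro mult_le_mono2) simp
  finally show ?thesis .
qed

lemma mod_div_less_mult:
  fixes k n1 n2 :: nat
  assumes "k < n1 * n2"
  shows "k mod n1 < n1" "k div n1 < n2"
  using assms less_mult_imp_div_less[of k n2 n1]
  by (auto simp: mult.commute intro!: mod_less_divisor Nat.gr0I)

lemma card_mod_div_rectangle:
  fixes n1 n2 :: nat
  shows "card {k. k < n1 * n2 \<and> P (k mod n1) \<and> Q (k div n1)}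
       = card {a. a < n1 \<and> P a} * card {b. b < n2 \<and> Q b}"
proof -
  let ?f = "\<lambda>(a, b). a + n1 * b"
  let ?R = "{a. a < n1 \<and> P a} \<times> {b. b < n2 \<and> Q b}"
  have "inj_on ?f ?R"
  proof (rule inj_onI, clarify)
    fix a b a' b' assume "a < n1" "a' < n1" and eq: "a + n1 * b = a' + n1 * b'"
    then have "(a + n1 * b) mod n1 = (a' + n1 * b') mod n1" "(a + n1 * b) div n1 = (a' + n1 * b') div n1"
      by simp_all
    with \<open>a < n1\<close> \<open>a' < n1\<close> show "a = a' \<and> b = b'"
      by simp
  qed
  moreover have "{k. k < n1 * n2 \<and> P (k mod n1) \<and> Q (k div n1)} = ?f ` ?R"
  proof (intro equalityI subsetI)
    fix k assume "k \<in> {k. k < n1 * n2 \<and> P (k mod n1) \<and> Q (k div n1)}"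
    then show "k \<in> ?f ` ?R"
      using mod_div_less_mult[of k n1 n2] mod_mult_div_eq[of k n1]
      by (auto intro!: image_eqI[of _ _ "(k mod n1, k div n1)"])
  qed (auto simp: add_mult_less_mult)
  ultimately show ?thesis
    by (simp add: card_image card_cartesian_product)
qed

text \<open>The tensor product of permutations of {..<n1} and {..<n2}, acting on {..<n1 * n2}
  through the identification of k with (k mod n1, k div n1).\<close>
definition perm_tensor :: "nat \<Rightarrow> nat \<Rightarrow> (nat \<Rightarrow> nat) \<Rightarrow> (nat \<Rightarrow> nat) \<Rightarrow> nat \<Rightarrow> nat" where
  "perm_tensor n1 n2 \<sigma> \<tau> k = (if k < n1 * n2 then \<sigma> (k mod n1) + n1 * \<tau> (k div n1) else k)"

lemma perm_tensor_id: "perm_tensor n1 n2 id id = id"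
  by (simp add: perm_tensor_def fun_eq_iff)

lemma perm_tensor_mod_div:
  assumes \<sigma>: "\<sigma> ` {..<n1} \<subseteq> {..<n1}" and \<tau>: "\<tau> ` {..<n2} \<subseteq> {..<n2}" and k: "k < n1 * n2"
  shows "perm_tensor n1 n2 \<sigma> \<tau> k < n1 * n2"
    and "perm_tensor n1 n2 \<sigma> \<tau> k mod n1 = \<sigma> (k mod n1)"
    and "perm_tensor n1 n2 \<sigma> \<tau> k div n1 = \<tau> (k div n1)"
proof -
  have "\<sigma> (k mod n1) < n1" "\<tau> (k div n1) < n2"
    using \<sigma> \<tau> mod_div_less_mult[OF k] by auto
  then show "perm_tensor n1 n2 \<sigma> \<tau> k < n1 * n2"
    and "perm_tensor n1 n2 \<sigma> \<tau> k mod n1 = \<sigma> (k mod n1)"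
    and "perm_tensor n1 n2 \<sigma> \<tau> k div n1 = \<tau> (k div n1)"
    using k by (simp_all add: perm_tensor_def add_mult_less_mult)
qed

lemma perm_tensor_comp:
  assumes "\<sigma> ` {..<n1} \<subseteq> {..<n1}" and "\<tau> ` {..<n2} \<subseteq> {..<n2}"
  shows "perm_tensor n1 n2 (\<sigma>' \<circ> \<sigma>) (\<tau>' \<circ> \<tau>) = perm_tensor n1 n2 \<sigma>' \<tau>' \<circ> perm_tensor n1 n2 \<sigma> \<tau>"
proof
  fix k
  show "perm_tensor n1 n2 (\<sigma>' \<circ> \<sigma>) (\<tau>' \<circ> \<tau>) k = (perm_tensor n1 n2 \<sigma>' \<tau>' \<circ> perm_tensor n1 n2 \<sigma> \<tau>) k"
  proof (cases "k < n1 * n2")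
    case True
    then show ?thesis
      using perm_tensor_mod_div[OF assms True]
      by (simp add: perm_tensor_def[of n1 n2 \<sigma>' \<tau>']) (simp add: perm_tensor_def)
  qed (simp add: perm_tensor_def)
qed

lemma perm_tensor_eq_iff:
  assumes "\<sigma> ` {..<n1} \<subseteq> {..<n1}" "\<tau> ` {..<n2} \<subseteq> {..<n2}"
    and "\<sigma>' ` {..<n1} \<subseteq> {..<n1}" "\<tau>' ` {..<n2} \<subseteq> {..<n2}" and k: "k < n1 * n2"
  shows "perm_tensor n1 n2 \<sigma> \<tau> k = perm_tensor n1 n2 \<sigma>' \<tau>' k
     \<longleftrightarrow> \<sigma> (k mod n1) = \<sigma>' (k mod n1) \<and> \<tau> (k div n1) = \<tau>' (k div n1)"
  using perm_tensor_mod_div[OF assms(1,2) k] perm_tensor_mod_div[OF assms(3,4) k]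
  by (auto simp: perm_tensor_def)

lemma perm_tensor_permutes:
  assumes \<sigma>: "\<sigma> permutes {..<n1}" and \<tau>: "\<tau> permutes {..<n2}"
  shows "perm_tensor n1 n2 \<sigma> \<tau> permutes {..<n1 * n2}"
proof -
  have range: "f ` {..<n} \<subseteq> {..<n}" if "f permutes {..<n}" for f :: "nat \<Rightarrow> nat" and n
    using permutes_image[OF that] by simp
  have inv: "inv_into UNIV f permutes {..<n}" if "f permutes {..<n}" for f :: "nat \<Rightarrow> nat" and n
    using permutes_inv[OF that] .
  have "perm_tensor n1 n2 (inv_into UNIV \<sigma>) (inv_into UNIV \<tau>) \<circ> perm_tensor n1 n2 \<sigma> \<tau> = id"
    "perm_tensor n1 n2 \<sigma> \<tau> \<circ> perm_tensor n1 n2 (inv_into UNIV \<sigma>) (inv_into UNIV \<tau>) = id"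
    using perm_tensor_comp[OF range[OF \<sigma>] range[OF \<tau>], of "inv_into UNIV \<sigma>" "inv_into UNIV \<tau>"]
      perm_tensor_comp[OF range[OF inv[OF \<sigma>]] range[OF inv[OF \<tau>]], of \<sigma> \<tau>]
    by (simp_all add: permutes_inv_o[OF \<sigma>] permutes_inv_o[OF \<tau>] perm_tensor_id)
  then have "bij (perm_tensor n1 n2 \<sigma> \<tau>)"
    by (rule o_bij)
  then show ?thesis
    by (auto simp: permutes_def bij_iff perm_tensor_def)
qed

lemma hamming_perm_tensor:
  assumes n: "n1 > 0" "n2 > 0"
    and \<sigma>: "\<sigma> ` {..<n1} \<subseteq> {..<n1}" "\<sigma>' ` {..<n1} \<subseteq> {..<n1}"
    and \<tau>: "\<tau> ` {..<n2} \<subseteq> {..<n2}" "\<tau>' ` {..<n2} \<subseteq> {..<n2}"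
  shows "hamming (n1 * n2) (perm_tensor n1 n2 \<sigma> \<tau>) (perm_tensor n1 n2 \<sigma>' \<tau>')
           \<le> hamming n1 \<sigma> \<sigma>' + hamming n2 \<tau> \<tau>'"
    and "hamming n1 \<sigma> \<sigma>' \<le> hamming (n1 * n2) (perm_tensor n1 n2 \<sigma> \<tau>) (perm_tensor n1 n2 \<sigma>' \<tau>')"
    and "hamming n2 \<tau> \<tau>' \<le> hamming (n1 * n2) (perm_tensor n1 n2 \<sigma> \<tau>) (perm_tensor n1 n2 \<sigma>' \<tau>')"
proof -
  define A where "A = {k. k < n1 * n2 \<and> \<sigma> (k mod n1) \<noteq> \<sigma>' (k mod n1) \<and> True}"
  define B where "B = {k. k < n1 * n2 \<and> True \<and> \<tau> (k div n1) \<noteq> \<tau>' (k div n1)}"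
  define c1 where "c1 = card {a. a < n1 \<and> \<sigma> a \<noteq> \<sigma>' a}"
  define c2 where "c2 = card {b. b < n2 \<and> \<tau> b \<noteq> \<tau>' b}"
  have D: "{k. k < n1 * n2 \<and> perm_tensor n1 n2 \<sigma> \<tau> k \<noteq> perm_tensor n1 n2 \<sigma>' \<tau>' k} = A \<union> B"
    using perm_tensor_eq_iff[OF \<sigma>(1) \<tau>(1) \<sigma>(2) \<tau>(2)] by (auto simp: A_def B_def)
  have "card A = c1 * n2" "card B = c2 * n1"
    using card_mod_div_rectangle[of n1 n2 "\<lambda>a. \<sigma> a \<noteq> \<sigma>' a" "\<lambda>_. True"]
      card_mod_div_rectangle[of n1 n2 "\<lambda>_. True" "\<lambda>b. \<tau> b \<noteq> \<tau>' b"]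
    by (simp_all add: A_def B_def c1_def c2_def mult.commute)
  moreover have "card (A \<union> B) \<le> card A + card B" "card A \<le> card (A \<union> B)" "card B \<le> card (A \<union> B)"
    by (simp_all add: card_Un_le card_mono A_def B_def)
  ultimately have le: "card (A \<union> B) \<le> c1 * n2 + c2 * n1" "c1 * n2 \<le> card (A \<union> B)" "c2 * n1 \<le> card (A \<union> B)"
    by simp_all
  have ham: "hamming n1 \<sigma> \<sigma>' = real (c1 * n2) / (real n1 * real n2)"
    "hamming n2 \<tau> \<tau>' = real (c2 * n1) / (real n1 * real n2)"
    "hamming (n1 * n2) (perm_tensor n1 n2 \<sigma> \<tau>) (perm_tensor n1 n2 \<sigma>' \<tau>')
       = real (card (A \<union> B)) / (real n1 * real n2)"
    using n unfolding hamming_def c1_def c2_def D by simp_all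
  show "hamming (n1 * n2) (perm_tensor n1 n2 \<sigma> \<tau>) (perm_tensor n1 n2 \<sigma>' \<tau>')
      \<le> hamming n1 \<sigma> \<sigma>' + hamming n2 \<tau> \<tau>'"
    unfolding ham add_divide_distrib[symmetric]
    using of_nat_mono[OF le(1), where 'a=real] by (intro divide_right_mono) simp_all
  show "hamming n1 \<sigma> \<sigma>' \<le> hamming (n1 * n2) (perm_tensor n1 n2 \<sigma> \<tau>) (perm_tensor n1 n2 \<sigma>' \<tau>')"
    unfolding ham using of_nat_mono[OF le(2), where 'a=real] by (intro divide_right_mono) simp_all
  show "hamming n2 \<tau> \<tau>' \<le> hamming (n1 * n2) (perm_tensor n1 n2 \<sigma> \<tau>) (perm_tensor n1 n2 \<sigma>' \<tau>')"
    unfolding ham using of_nat_mono[OF le(3), where 'a=real] by (intro divide_right_mono) simp_all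
qed


definition sofic_approx :: "('a, 'b) monoid_scheme \<Rightarrow> 'a set \<Rightarrow> real \<Rightarrow> nat \<Rightarrow> ('a \<Rightarrow> nat \<Rightarrow> nat) \<Rightarrow> bool" where
  "sofic_approx G F \<epsilon> n \<phi> \<longleftrightarrow> n > 0 \<and> (\<forall>g \<in> carrier G. \<phi> g permutes {..<n}) \<and> \<phi> \<one>\<^bsub>G\<^esub> = id \<and>
     (\<forall>g\<in>F. \<forall>h\<in>F. hamming n (\<phi> (g \<otimes>\<^bsub>G\<^esub> h)) (\<phi> g \<circ> \<phi> h) < \<epsilon>) \<and>
     (\<forall>g\<in>F. g \<noteq> \<one>\<^bsub>G\<^esub> \<longrightarrow> hamming n (\<phi> g) id > 1 - \<epsilon>)"

lemma sofic_iff_sofic_approx: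
  "sofic G \<longleftrightarrow>
    (\<forall>F \<epsilon>. finite F \<longrightarrow> F \<subseteq> carrier G \<longrightarrow> \<epsilon> > 0 \<longrightarrow> (\<exists>n \<phi>. sofic_approx G F \<epsilon> n \<phi>))"
  by (simp add: sofic_def sofic_approx_def)

lemma sofic_approx_DirProd:
  assumes G1: "monoid G1" and G2: "monoid G2"
    and \<phi>1: "sofic_approx G1 F1 \<epsilon>1 n1 \<phi>1" and \<phi>2: "sofic_approx G2 F2 \<epsilon>2 n2 \<phi>2"
    and F: "F \<subseteq> F1 \<times> F2" "F1 \<subseteq> carrier G1" "F2 \<subseteq> carrier G2"
  shows "sofic_approx (G1 \<times>\<times> G2) F (\<epsilon>1 + \<epsilon>2) (n1 * n2) (\<lambda>g. perm_tensor n1 n2 (\<phi>1 (fst g)) (\<phi>2 (snd g)))"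
proof -
  from \<phi>1 have n1: "n1 > 0" and perm1: "\<forall>g \<in> carrier G1. \<phi>1 g permutes {..<n1}"
    and mult1: "\<forall>g\<in>F1. \<forall>h\<in>F1. hamming n1 (\<phi>1 (g \<otimes>\<^bsub>G1\<^esub> h)) (\<phi>1 g \<circ> \<phi>1 h) < \<epsilon>1"
    by (simp_all add: sofic_approx_def)
  from \<phi>2 have n2: "n2 > 0" and perm2: "\<forall>g \<in> carrier G2. \<phi>2 g permutes {..<n2}"
    and mult2: "\<forall>g\<in>F2. \<forall>h\<in>F2. hamming n2 (\<phi>2 (g \<otimes>\<^bsub>G2\<^esub> h)) (\<phi>2 g \<circ> \<phi>2 h) < \<epsilon>2"
    by (simp_all add: sofic_approx_def)
  have range1: "\<phi>1 g ` {..<n1} \<subseteq> {..<n1}" "(\<phi>1 g \<circ> \<phi>1 h) ` {..<n1} \<subseteq> {..<n1}"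
    if "g \<in> carrier G1" "h \<in> carrier G1" for g h
    using that perm1 permutes_image by (simp_all add: image_comp[symmetric]) blast+
  have range2: "\<phi>2 g ` {..<n2} \<subseteq> {..<n2}" "(\<phi>2 g \<circ> \<phi>2 h) ` {..<n2} \<subseteq> {..<n2}"
    if "g \<in> carrier G2" "h \<in> carrier G2" for g h
    using that perm2 permutes_image by (simp_all add: image_comp[symmetric]) blast+
  have c: "fst g \<in> F1" "snd g \<in> F2" "fst g \<in> carrier G1" "snd g \<in> carrier G2" if "g \<in> F" for g
    using subsetD[OF F(1) that] F(2,3) by (auto simp: mem_Times_iff)
  have hamming_nonneg: "0 \<le> hamming n \<sigma> \<tau>" for n \<sigma> \<tau>
    by (simp add: hamming_def)
  show ?thesis
    unfolding sofic_approx_def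
  proof (intro conjI ballI impI)
    show "n1 * n2 > 0"
      using n1 n2 by simp
    show "perm_tensor n1 n2 (\<phi>1 (fst g)) (\<phi>2 (snd g)) permutes {..<n1 * n2}" if "g \<in> carrier (G1 \<times>\<times> G2)" for g
      using that perm1 perm2 by (auto intro: perm_tensor_permutes)
    show "perm_tensor n1 n2 (\<phi>1 (fst \<one>\<^bsub>G1 \<times>\<times> G2\<^esub>)) (\<phi>2 (snd \<one>\<^bsub>G1 \<times>\<times> G2\<^esub>)) = id"
      using \<phi>1 \<phi>2 by (simp add: sofic_approx_def perm_tensor_id)
  next
    fix g h assume gh: "g \<in> F" "h \<in> F"
    have "hamming (n1 * n2) (perm_tensor n1 n2 (\<phi>1 (fst (g \<otimes>\<^bsub>G1 \<times>\<times> G2\<^esub> h))) (\<phi>2 (snd (g \<otimes>\<^bsub>G1 \<times>\<times> G2\<^esub> h))))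
          (perm_tensor n1 n2 (\<phi>1 (fst g)) (\<phi>2 (snd g)) \<circ> perm_tensor n1 n2 (\<phi>1 (fst h)) (\<phi>2 (snd h)))
        \<le> hamming n1 (\<phi>1 (fst g \<otimes>\<^bsub>G1\<^esub> fst h)) (\<phi>1 (fst g) \<circ> \<phi>1 (fst h))
          + hamming n2 (\<phi>2 (snd g \<otimes>\<^bsub>G2\<^esub> snd h)) (\<phi>2 (snd g) \<circ> \<phi>2 (snd h))"
      unfolding mult_DirProd' fst_conv snd_conv
        perm_tensor_comp[OF range1(1)[OF c(3,3)[OF gh(2)]] range2(1)[OF c(4,4)[OF gh(2)]], symmetric]
      using c[OF gh(1)] c[OF gh(2)] G1 G2
      by (intro hamming_perm_tensor n1 n2 range1 range2) (auto simp: monoid.m_closed)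
    also have "\<dots> < \<epsilon>1 + \<epsilon>2"
      using mult1 mult2 c gh by (intro add_strict_mono) auto
    finally show "hamming (n1 * n2) (perm_tensor n1 n2 (\<phi>1 (fst (g \<otimes>\<^bsub>G1 \<times>\<times> G2\<^esub> h))) (\<phi>2 (snd (g \<otimes>\<^bsub>G1 \<times>\<times> G2\<^esub> h))))
          (perm_tensor n1 n2 (\<phi>1 (fst g)) (\<phi>2 (snd g)) \<circ> perm_tensor n1 n2 (\<phi>1 (fst h)) (\<phi>2 (snd h)))
        < \<epsilon>1 + \<epsilon>2" .
  next
    fix g assume g: "g \<in> F" and nontriv: "g \<noteq> \<one>\<^bsub>G1 \<times>\<times> G2\<^esub>"
    \<comment> \<open>Both tolerances are positive, since the multiplication condition is not vacuous.\<close>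
    have "0 < \<epsilon>1" "0 < \<epsilon>2"
      using mult1 mult2 c[OF g] hamming_nonneg by (meson le_less_trans)+
    have id_range: "id ` {..<n} \<subseteq> {..<n}" for n :: nat
      by simp
    note bounds = hamming_perm_tensor(2,3)[OF n1 n2 range1(1)[OF c(3,3)[OF g]] id_range
        range2(1)[OF c(4,4)[OF g]] id_range]
    have "fst g \<noteq> \<one>\<^bsub>G1\<^esub> \<or> snd g \<noteq> \<one>\<^bsub>G2\<^esub>"
      using nontriv by (cases g) auto
    then show "1 - (\<epsilon>1 + \<epsilon>2) < hamming (n1 * n2) (perm_tensor n1 n2 (\<phi>1 (fst g)) (\<phi>2 (snd g))) id"
      using \<phi>1 \<phi>2 c[OF g] bounds \<open>0 < \<epsilon>1\<close> \<open>0 < \<epsilon>2\<close>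
      by (auto simp: sofic_approx_def perm_tensor_id)
  qed
qed

lemma sofic_DirProd:
  assumes G1: "monoid G1" and G2: "monoid G2" and S1: "sofic G1" and S2: "sofic G2"
  shows "sofic (G1 \<times>\<times> G2)"
  unfolding sofic_iff_sofic_approx
proof (intro allI impI)
  fix F and \<epsilon> :: real
  assume F: "finite F" "F \<subseteq> carrier (G1 \<times>\<times> G2)" and \<epsilon>: "\<epsilon> > 0"
  then have F1: "finite (fst ` F)" "fst ` F \<subseteq> carrier G1" and F2: "finite (snd ` F)" "snd ` F \<subseteq> carrier G2"
    by auto
  have \<epsilon>2: "\<epsilon> / 2 > 0"
    using \<epsilon> by simp
  obtain n1 \<phi>1 where "sofic_approx G1 (fst ` F) (\<epsilon> / 2) n1 \<phi>1"
    using S1[unfolded sofic_iff_sofic_approx, rule_format, OF F1 \<epsilon>2] by blast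
  moreover obtain n2 \<phi>2 where "sofic_approx G2 (snd ` F) (\<epsilon> / 2) n2 \<phi>2"
    using S2[unfolded sofic_iff_sofic_approx, rule_format, OF F2 \<epsilon>2] by blast
  ultimately have "sofic_approx (G1 \<times>\<times> G2) F (\<epsilon> / 2 + \<epsilon> / 2) (n1 * n2)
      (\<lambda>g. perm_tensor n1 n2 (\<phi>1 (fst g)) (\<phi>2 (snd g)))"
    using F1 F2 subset_fst_snd[of F] by (intro sofic_approx_DirProd G1 G2)
  then show "\<exists>n \<phi>. sofic_approx (G1 \<times>\<times> G2) F \<epsilon> n \<phi>"
    by auto
qed

section \<open>Direct products of amenable groups\<close>

lemma abs_le_inverse_nat_imp_zero:
  fixes d c :: real
  assumes "\<And>N::nat. N > 0 \<Longrightarrow> \<bar>d\<bar> \<le> c / real N"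
  shows "d = 0"
proof (rule ccontr)
  assume "d \<noteq> 0"
  then obtain N :: nat where "N > 0" "inverse (real N) < \<bar>d\<bar> / (\<bar>c\<bar> + 1)"
    using ex_inverse_of_nat_less[of "\<bar>d\<bar> / (\<bar>c\<bar> + 1)"] by auto
  then have "c / real N < \<bar>d\<bar>"
    by (simp add: field_simps)
  with assms[OF \<open>N > 0\<close>] show False
    by simp
qed

locale finitely_additive_prob =
  fixes \<Omega> :: "'a set" and m :: "'a set \<Rightarrow> real"
  assumes nonneg: "A \<subseteq> \<Omega> \<Longrightarrow> 0 \<le> m A"
    and total: "m \<Omega> = 1"
    and additive: "A \<subseteq> \<Omega> \<Longrightarrow> B \<subseteq> \<Omega> \<Longrightarrow> A \<inter> B = {} \<Longrightarrow> m (A \<union> B) = m A + m B"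
begin

lemma measure_empty: "m {} = 0"
  using additive[of "{}" "{}"] by simp

lemma measure_mono:
  assumes "A \<subseteq> B" "B \<subseteq> \<Omega>"
  shows "m A \<le> m B"
proof -
  have "m B = m (A \<union> (B - A))"
    using assms(1) by (simp add: Un_absorb1)
  also have "\<dots> = m A + m (B - A)"
    using assms by (intro additive) auto
  moreover have "0 \<le> m (B - A)"
    using assms by (intro nonneg) auto
  ultimately show ?thesis
    by simp
qed

lemma measure_le_one: "A \<subseteq> \<Omega> \<Longrightarrow> m A \<le> 1"
  using measure_mono[of A \<Omega>] total by simp

lemma measure_level_sets:
  fixes w :: "'a \<Rightarrow> nat"
  assumes "E \<subseteq> \<Omega>"
  shows "(\<Sum>j<B. m {x\<in>E. w x = j}) = m {x\<in>E. w x < B}"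
proof (induction B)
  case (Suc B)
  have "{x\<in>E. w x < Suc B} = {x\<in>E. w x < B} \<union> {x\<in>E. w x = B}"
    by auto
  then show ?case
    using Suc assms by (simp add: additive subset_iff disjoint_iff)
qed (simp add: measure_empty)

text \<open>Layer-cake integral of a function \<Omega> \<rightarrow> {0..B}.\<close>
definition layer_sum :: "nat \<Rightarrow> ('a \<Rightarrow> nat) \<Rightarrow> real" where
  "layer_sum B u = (\<Sum>j<B. m {x\<in>\<Omega>. j < u x})"

lemma layer_sum_cong: "(\<And>x. x \<in> \<Omega> \<Longrightarrow> u x = v x) \<Longrightarrow> layer_sum B u = layer_sum B v"
  unfolding layer_sum_def by (intro sum.cong refl arg_cong[where f=m]) auto

lemma layer_sum_mono: "(\<And>x. x \<in> \<Omega> \<Longrightarrow> u x \<le> v x) \<Longrightarrow> layer_sum B u \<le> layer_sum B v"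
  unfolding layer_sum_def by (intro sum_mono measure_mono) (auto intro: less_le_trans)

lemma layer_sum_nonneg: "0 \<le> layer_sum B u"
  unfolding layer_sum_def by (intro sum_nonneg nonneg) auto

lemma layer_sum_bound_irrelevant:
  assumes "\<And>x. x \<in> \<Omega> \<Longrightarrow> u x \<le> B" and "B \<le> B'"
  shows "layer_sum B' u = layer_sum B u"
  unfolding layer_sum_def
proof (rule sum.mono_neutral_right)
  show "\<forall>j\<in>{..<B'} - {..<B}. m {x\<in>\<Omega>. j < u x} = 0"
  proof
    fix j assume "j \<in> {..<B'} - {..<B}"
    then have "{x\<in>\<Omega>. j < u x} = {}"
      using assms(1) by fastforce
    then show "m {x\<in>\<Omega>. j < u x} = 0"
      by (simp only: measure_empty)
  qed
qed (use assms(2) in auto)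

lemma layer_sum_const: "c \<le> B \<Longrightarrow> layer_sum B (\<lambda>_. c) = real c"
  using layer_sum_bound_irrelevant[of "\<lambda>_. c" c B] total by (simp add: layer_sum_def)

lemma layer_sum_add_indicator:
  assumes E: "E \<subseteq> \<Omega>" and bound: "\<And>x. x \<in> \<Omega> \<Longrightarrow> w x + of_bool (x \<in> E) \<le> B"
  shows "layer_sum B (\<lambda>x. w x + of_bool (x \<in> E)) = layer_sum B w + m E"
proof -
  have "m {x\<in>\<Omega>. j < w x + of_bool (x \<in> E)} = m {x\<in>\<Omega>. j < w x} + m {x\<in>E. w x = j}" for j
  proof -
    have "{x\<in>\<Omega>. j < w x + of_bool (x \<in> E)} = {x\<in>\<Omega>. j < w x} \<union> {x\<in>E. w x = j}"
      using E by auto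
    then show ?thesis
      using E by (simp add: additive disjoint_iff subset_iff)
  qed
  then have "layer_sum B (\<lambda>x. w x + of_bool (x \<in> E)) = layer_sum B w + m {x\<in>E. w x < B}"
    by (simp add: layer_sum_def sum.distrib measure_level_sets[OF E])
  also have "{x\<in>E. w x < B} = E"
    using E bound by fastforce
  finally show ?thesis .
qed

lemma layer_sum_add:
  assumes "\<And>x. x \<in> \<Omega> \<Longrightarrow> u x + v x \<le> B"
  shows "layer_sum B (\<lambda>x. u x + v x) = layer_sum B u + layer_sum B v"
proof -
  have add_bounded: "layer_sum B (\<lambda>x. u x + v x) = layer_sum B u + layer_sum B v"
    if "\<And>x. x \<in> \<Omega> \<Longrightarrow> v x \<le> b" "\<And>x. x \<in> \<Omega> \<Longrightarrow> u x + v x \<le> B" for b u v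
    using that
  proof (induction b arbitrary: u v)
    case 0
    then show ?case
      using layer_sum_cong[of v "\<lambda>_. 0"] layer_sum_cong[of "\<lambda>x. u x + v x" u] layer_sum_const[of 0 B]
      by simp
  next
    case (Suc b)
    \<comment> \<open>Peel off the bottom layer of v.\<close>
    define E where "E = {x\<in>\<Omega>. 0 < v x}"
    define v' where "v' x = v x - 1" for x
    have v: "v x = v' x + of_bool (x \<in> E)" if "x \<in> \<Omega>" for x
      using that by (auto simp: E_def v'_def)
    have E: "E \<subseteq> \<Omega>"
      by (simp add: E_def)
    have "layer_sum B (\<lambda>x. u x + v x) = layer_sum B (\<lambda>x. (u x + of_bool (x \<in> E)) + v' x)"
      using v by (intro layer_sum_cong) simp
    moreover have "\<dots> = layer_sum B (\<lambda>x. u x + of_bool (x \<in> E)) + layer_sum B v'"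
    proof (rule Suc.IH)
      fix x assume x: "x \<in> \<Omega>"
      show "v' x \<le> b"
        using Suc.prems(1)[OF x] by (simp add: v'_def)
      show "u x + of_bool (x \<in> E) + v' x \<le> B"
        using Suc.prems(2)[OF x] v[OF x] by simp
    qed
    moreover have "layer_sum B (\<lambda>x. u x + of_bool (x \<in> E)) = layer_sum B u + m E"
      using Suc.prems(2) v by (intro layer_sum_add_indicator[OF E]) fastforce
    moreover have "layer_sum B v = layer_sum B v' + m E"
    proof -
      have "layer_sum B v = layer_sum B (\<lambda>x. v' x + of_bool (x \<in> E))"
        using v by (rule layer_sum_cong)
      also have "\<dots> = layer_sum B v' + m E"
        using Suc.prems(2) v by (intro layer_sum_add_indicator[OF E]) fastforce
      finally show ?thesis .
    qed
    ultimately show ?case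
      by simp
  qed
  show ?thesis
    by (rule add_bounded[where b=B]) (use assms in \<open>auto intro: add_leD2\<close>)
qed

lemma layer_sum_mult:
  assumes "\<And>x. x \<in> \<Omega> \<Longrightarrow> k * u x \<le> B"
  shows "layer_sum B (\<lambda>x. k * u x) = real k * layer_sum B u"
  using assms
proof (induction k)
  case 0
  then show ?case
    using layer_sum_const[of 0 B] by simp
next
  case (Suc k)
  have "layer_sum B (\<lambda>x. Suc k * u x) = layer_sum B u + layer_sum B (\<lambda>x. k * u x)"
    using Suc.prems by (simp add: layer_sum_add)
  also have "layer_sum B (\<lambda>x. k * u x) = real k * layer_sum B u"
  proof (rule Suc.IH)
    fix x assume "x \<in> \<Omega>"
    then show "k * u x \<le> B"
      using Suc.prems[of x] by simp
  qed
  finally show ?case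
    by (simp add: algebra_simps)
qed

definition discretize :: "nat \<Rightarrow> ('a \<Rightarrow> real) \<Rightarrow> 'a \<Rightarrow> nat" where
  "discretize N f x = nat \<lfloor>real N * f x\<rfloor>"

lemma discretize_le:
  assumes "0 \<le> f x" "f x \<le> 1"
  shows "discretize N f x \<le> N"
proof -
  have "real N * f x \<le> real N"
    using assms by (simp add: mult_left_le)
  then show ?thesis
    by (simp add: discretize_def nat_le_iff floor_le_iff)
qed

lemma discretize_bounds:
  assumes "0 \<le> f x"
  shows "real (discretize N f x) \<le> real N * f x" "real N * f x < real (discretize N f x) + 1"
  using assms by (simp_all add: discretize_def)

lemma le_discretize: "real c \<le> real N * f x \<Longrightarrow> c \<le> discretize N f x"
  unfolding discretize_def by (rule le_nat_floor)

lemma discretize_add: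
  assumes "0 \<le> f x" "0 \<le> g x"
  shows "discretize N f x + discretize N g x \<le> discretize N (\<lambda>x. f x + g x) x"
    and "discretize N (\<lambda>x. f x + g x) x \<le> discretize N f x + discretize N g x + 1"
proof -
  have "real (discretize N f x + discretize N g x) \<le> real N * (f x + g x)"
    using discretize_bounds(1)[of f x N] discretize_bounds(1)[of g x N] assms
    by (simp add: algebra_simps)
  then show "discretize N f x + discretize N g x \<le> discretize N (\<lambda>x. f x + g x) x"
    by (rule le_discretize)
  have "real (discretize N (\<lambda>x. f x + g x) x) < real (discretize N f x) + real (discretize N g x) + 2"
    using discretize_bounds(1)[of "\<lambda>x. f x + g x" x N] discretize_bounds(2)[of f x N]
      discretize_bounds(2)[of g x N] assms by (simp add: algebra_simps)
  then show "discretize N (\<lambda>x. f x + g x) x \<le> discretize N f x + discretize N g x + 1"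
    by linarith
qed

lemma less_discretize_iff:
  assumes "N > 0"
  shows "j < discretize N f x \<longleftrightarrow> real (Suc j) / real N \<le> f x"
proof -
  have "j < nat \<lfloor>y\<rfloor> \<longleftrightarrow> real (Suc j) \<le> y" for y :: real
  proof
    assume j: "j < nat \<lfloor>y\<rfloor>"
    then have "0 \<le> y"
      using nat_floor_neg[of y] by linarith
    then show "real (Suc j) \<le> y"
      using of_nat_floor[of y] j by (meson Suc_leI of_nat_le_iff order_trans)
  qed (simp add: le_nat_floor Suc_le_eq[symmetric])
  then show ?thesis
    using assms by (simp add: discretize_def pos_divide_le_eq mult.commute)
qed

text \<open>There is no Lebesgue integral for a finitely additive measure. For f : \<Omega> \<rightarrow> [0, 1] the
  Riemann-type sums step_sum N f = (1/N) \<Sum>j<N. m {f \<ge> (j+1)/N} are all within 1/N of one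
  another (step_sum_le), and the integral is their supremum.\<close>
definition step_sum :: "nat \<Rightarrow> ('a \<Rightarrow> real) \<Rightarrow> real" where
  "step_sum N f = layer_sum N (discretize N f) / real N"

definition integral :: "('a \<Rightarrow> real) \<Rightarrow> real" where
  "integral f = (SUP n. step_sum (Suc n) f)"

lemma step_sum_nonneg: "0 \<le> step_sum N f"
  by (simp add: step_sum_def layer_sum_nonneg)

context
  fixes f :: "'a \<Rightarrow> real"
  assumes f: "\<And>x. x \<in> \<Omega> \<Longrightarrow> f x \<in> {0..1}"
begin

lemma discretize_le_scale: "x \<in> \<Omega> \<Longrightarrow> discretize N f x \<le> N"
  using f discretize_le by auto

lemma step_sum_le_mult:
  assumes "N > 0" "k > 0"
  shows "step_sum N f \<le> step_sum (k * N) f"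
proof -
  have "real k * layer_sum N (discretize N f) = real k * layer_sum (k * N) (discretize N f)"
    using layer_sum_bound_irrelevant[of "discretize N f" N "k * N"] discretize_le_scale assms by simp
  also have "\<dots> = layer_sum (k * N) (\<lambda>x. k * discretize N f x)"
    using discretize_le_scale by (intro layer_sum_mult[symmetric]) simp
  also have "\<dots> \<le> layer_sum (k * N) (discretize (k * N) f)"
  proof (intro layer_sum_mono le_discretize)
    fix x assume "x \<in> \<Omega>"
    then have "real (discretize N f x) \<le> real N * f x"
      using discretize_bounds(1) f by auto
    then have "real k * real (discretize N f x) \<le> real k * (real N * f x)"
      by (rule mult_left_mono) simp
    then show "real (k * discretize N f x) \<le> real (k * N) * f x"
      by simp
  qed
  finally show ?thesis
    using assms by (simp add: step_sum_def field_simps)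
qed

lemma step_sum_mult_le:
  assumes "N > 0" "k > 0"
  shows "step_sum (k * N) f \<le> step_sum N f + 1 / real N"
proof -
  define B where "B = k * (N + 1)"
  have NB: "N + 1 \<le> B" "k * N \<le> B"
    using mult_le_mono1[of 1 k "N + 1"] assms by (simp_all add: B_def)
  have "layer_sum (k * N) (discretize (k * N) f) = layer_sum B (discretize (k * N) f)"
    using discretize_le_scale NB by (intro layer_sum_bound_irrelevant[symmetric]) auto
  also have "\<dots> \<le> layer_sum B (\<lambda>x. k * (discretize N f x + 1))"
  proof (rule layer_sum_mono)
    fix x assume x: "x \<in> \<Omega>"
    have "real (discretize (k * N) f x) \<le> real k * (real N * f x)"
      using discretize_bounds(1)[of f x "k * N"] f[OF x] by simp
    also have "\<dots> < real k * (real (discretize N f x) + 1)"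
      using discretize_bounds(2)[of f x N] f[OF x] assms by simp
    also have "\<dots> = real (k * (discretize N f x + 1))"
      by (simp add: algebra_simps)
    finally show "discretize (k * N) f x \<le> k * (discretize N f x + 1)"
      by (simp only: of_nat_less_iff)
  qed
  also have "\<dots> = real k * layer_sum B (\<lambda>x. discretize N f x + 1)"
    using discretize_le_scale by (intro layer_sum_mult) (simp add: B_def)
  also have "layer_sum B (\<lambda>x. discretize N f x + 1) = layer_sum B (discretize N f) + layer_sum B (\<lambda>_. 1)"
    using discretize_le_scale NB by (intro layer_sum_add) (meson add_le_mono1 le_trans)
  also have "layer_sum B (discretize N f) = layer_sum N (discretize N f)"
    using discretize_le_scale NB by (intro layer_sum_bound_irrelevant) auto
  also have "layer_sum B (\<lambda>_. 1) = 1"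
    using NB layer_sum_const[of 1 B] by simp
  finally show ?thesis
    using assms by (simp add: step_sum_def field_simps)
qed

lemma step_sum_le:
  assumes "N > 0" "N' > 0"
  shows "step_sum N' f \<le> step_sum N f + 1 / real N"
proof -
  have "step_sum N' f \<le> step_sum (N' * N) f"
    using step_sum_le_mult[OF assms(2,1)] by (simp only: mult.commute)
  then show ?thesis
    using step_sum_mult_le[OF assms] by linarith
qed

lemma integral_bounds:
  assumes "N > 0"
  shows "step_sum N f \<le> integral f" "integral f \<le> step_sum N f + 1 / real N"
proof -
  have "bdd_above (range (\<lambda>n. step_sum (Suc n) f))"
    using step_sum_le[of 1] by (intro bdd_aboveI2[where M="step_sum 1 f + 1"]) simp
  then have "step_sum (Suc (N - 1)) f \<le> integral f"
    unfolding integral_def by (rule cSUP_upper[OF UNIV_I])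
  then show "step_sum N f \<le> integral f"
    using assms by simp
  show "integral f \<le> step_sum N f + 1 / real N"
    unfolding integral_def
  proof (rule cSUP_least)
    show "step_sum (Suc n) f \<le> step_sum N f + 1 / real N" for n
      using step_sum_le[OF assms, of "Suc n"] by simp
  qed simp
qed

lemma integral_nonneg: "0 \<le> integral f"
  using integral_bounds(1)[of 1] step_sum_nonneg[of 1 f] by simp

end

lemma step_sum_add:
  assumes N: "N > 0" and f: "\<And>x. x \<in> \<Omega> \<Longrightarrow> 0 \<le> f x" and g: "\<And>x. x \<in> \<Omega> \<Longrightarrow> 0 \<le> g x"
    and fg: "\<And>x. x \<in> \<Omega> \<Longrightarrow> f x + g x \<le> 1"
  shows "step_sum N f + step_sum N g \<le> step_sum N (\<lambda>x. f x + g x)"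
    and "step_sum N (\<lambda>x. f x + g x) \<le> step_sum N f + step_sum N g + 1 / real N"
proof -
  let ?d = "discretize N"
  have lower: "?d f x + ?d g x \<le> ?d (\<lambda>x. f x + g x) x" if "x \<in> \<Omega>" for x
    using discretize_add(1)[where f=f and g=g, OF f[OF that] g[OF that]] .
  have upper: "?d (\<lambda>x. f x + g x) x \<le> ?d f x + ?d g x + 1" if "x \<in> \<Omega>" for x
    using discretize_add(2)[where f=f and g=g, OF f[OF that] g[OF that]] .
  have bound: "?d (\<lambda>x. f x + g x) x \<le> N" if "x \<in> \<Omega>" for x
    using f[OF that] g[OF that] fg[OF that] by (intro discretize_le) simp_all
  have sum_bound: "?d f x + ?d g x \<le> N" if "x \<in> \<Omega>" for x
    using lower[OF that] bound[OF that] by (rule le_trans)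
  then have summand_bound: "?d f x \<le> N" "?d g x \<le> N" if "x \<in> \<Omega>" for x
    using that by fastforce+
  have "layer_sum N (?d f) + layer_sum N (?d g) = layer_sum N (\<lambda>x. ?d f x + ?d g x)"
    using sum_bound by (intro layer_sum_add[symmetric])
  also have "\<dots> \<le> layer_sum N (?d (\<lambda>x. f x + g x))"
    using lower by (rule layer_sum_mono)
  finally show "step_sum N f + step_sum N g \<le> step_sum N (\<lambda>x. f x + g x)"
    using N by (simp add: step_sum_def add_divide_distrib[symmetric] divide_right_mono)
  have "layer_sum N (?d (\<lambda>x. f x + g x)) = layer_sum (N + 1) (?d (\<lambda>x. f x + g x))"
    using bound by (intro layer_sum_bound_irrelevant[symmetric]) auto
  also have "\<dots> \<le> layer_sum (N + 1) (\<lambda>x. (?d f x + ?d g x) + 1)"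
    using upper by (rule layer_sum_mono)
  also have "\<dots> = layer_sum (N + 1) (\<lambda>x. ?d f x + ?d g x) + layer_sum (N + 1) (\<lambda>_. 1)"
    using sum_bound by (intro layer_sum_add) simp
  also have "layer_sum (N + 1) (\<lambda>x. ?d f x + ?d g x) = layer_sum (N + 1) (?d f) + layer_sum (N + 1) (?d g)"
    using sum_bound by (intro layer_sum_add) (simp add: le_SucI)
  also have "layer_sum (N + 1) (?d f) + layer_sum (N + 1) (?d g) + layer_sum (N + 1) (\<lambda>_. 1)
      = layer_sum N (?d f) + layer_sum N (?d g) + 1"
    using layer_sum_bound_irrelevant[OF summand_bound(1), where B'="N + 1"]
      layer_sum_bound_irrelevant[OF summand_bound(2), where B'="N + 1"] layer_sum_const[of 1 "N + 1"]
    by simp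
  finally show "step_sum N (\<lambda>x. f x + g x) \<le> step_sum N f + step_sum N g + 1 / real N"
    using N by (simp add: step_sum_def field_simps)
qed

lemma integral_add:
  assumes f: "\<And>x. x \<in> \<Omega> \<Longrightarrow> 0 \<le> f x" and g: "\<And>x. x \<in> \<Omega> \<Longrightarrow> 0 \<le> g x"
    and fg: "\<And>x. x \<in> \<Omega> \<Longrightarrow> f x + g x \<le> 1"
  shows "integral (\<lambda>x. f x + g x) = integral f + integral g"
proof -
  have range: "f x \<in> {0..1}" "g x \<in> {0..1}" "f x + g x \<in> {0..1}" if "x \<in> \<Omega>" for x
    using f[OF that] g[OF that] fg[OF that] by auto
  \<comment> \<open>Each of the three integrals is within 1/N of its step sum, and the step sums are additive up to 1/N.\<close>
  have "\<bar>integral (\<lambda>x. f x + g x) - (integral f + integral g)\<bar> \<le> 2 / real N" if N: "N > 0" for N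
    using integral_bounds[where f=f, OF range(1) N] integral_bounds[where f=g, OF range(2) N]
      integral_bounds[where f="\<lambda>x. f x + g x", OF range(3) N]
      step_sum_add[where f=f and g=g, OF N f g fg] by (simp add: abs_le_iff field_simps)
  then have "integral (\<lambda>x. f x + g x) - (integral f + integral g) = 0"
    by (rule abs_le_inverse_nat_imp_zero)
  then show ?thesis
    by simp
qed

lemma integral_one: "integral (\<lambda>_. 1) = 1"
proof -
  have "discretize N (\<lambda>_. 1) = (\<lambda>_. N)" for N
    by (simp add: discretize_def fun_eq_iff)
  then have "step_sum (Suc n) (\<lambda>_. 1) = 1" for n
    using layer_sum_const[of "Suc n" "Suc n"] by (simp add: step_sum_def)
  then show ?thesis
    by (simp add: integral_def)
qed

lemma integral_cong: "(\<And>x. x \<in> \<Omega> \<Longrightarrow> f x = g x) \<Longrightarrow> integral f = integral g"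
proof -
  assume fg: "\<And>x. x \<in> \<Omega> \<Longrightarrow> f x = g x"
  have "layer_sum N (discretize N f) = layer_sum N (discretize N g)" for N
    by (rule layer_sum_cong) (simp add: discretize_def fg)
  then show ?thesis
    by (simp add: integral_def step_sum_def)
qed

lemma integral_equimeasurable:
  assumes "\<And>t. m {x\<in>\<Omega>. t \<le> f x} = m {x\<in>\<Omega>. t \<le> g x}"
  shows "integral f = integral g"
proof -
  have "layer_sum (Suc n) (discretize (Suc n) f) = layer_sum (Suc n) (discretize (Suc n) g)" for n
    using assms by (simp add: layer_sum_def less_discretize_iff)
  then show ?thesis
    by (simp add: integral_def step_sum_def)
qed

end

lemma finitely_additive_prob_prod:
  assumes "finitely_additive_prob \<Omega>1 m1" and "finitely_additive_prob \<Omega>2 m2"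
  shows "finitely_additive_prob (\<Omega>1 \<times> \<Omega>2)
    (\<lambda>A. finitely_additive_prob.integral \<Omega>1 m1 (\<lambda>x. m2 {y. (x, y) \<in> A}))"
proof -
  interpret M1: finitely_additive_prob \<Omega>1 m1 by fact
  interpret M2: finitely_additive_prob \<Omega>2 m2 by fact
  have fibre: "{y. (x, y) \<in> A} \<subseteq> \<Omega>2" if "A \<subseteq> \<Omega>1 \<times> \<Omega>2" for A x
    using that by auto
  show ?thesis
  proof
    fix A assume "A \<subseteq> \<Omega>1 \<times> \<Omega>2"
    then show "0 \<le> M1.integral (\<lambda>x. m2 {y. (x, y) \<in> A})"
      using fibre M2.nonneg M2.measure_le_one by (intro M1.integral_nonneg) auto
  next
    have "M1.integral (\<lambda>x. m2 {y. (x, y) \<in> \<Omega>1 \<times> \<Omega>2}) = M1.integral (\<lambda>_. 1)"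
      by (intro M1.integral_cong) (simp add: M2.total)
    then show "M1.integral (\<lambda>x. m2 {y. (x, y) \<in> \<Omega>1 \<times> \<Omega>2}) = 1"
      by (simp add: M1.integral_one)
  next
    fix A B assume A: "A \<subseteq> \<Omega>1 \<times> \<Omega>2" and B: "B \<subseteq> \<Omega>1 \<times> \<Omega>2" and AB: "A \<inter> B = {}"
    have split: "m2 {y. (x, y) \<in> A \<union> B} = m2 {y. (x, y) \<in> A} + m2 {y. (x, y) \<in> B}" for x
      using M2.additive[OF fibre[OF A] fibre[OF B]] AB by (auto simp: Collect_disj_eq)
    have "M1.integral (\<lambda>x. m2 {y. (x, y) \<in> A \<union> B})
        = M1.integral (\<lambda>x. m2 {y. (x, y) \<in> A} + m2 {y. (x, y) \<in> B})"
      by (intro M1.integral_cong split)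
    also have "\<dots> = M1.integral (\<lambda>x. m2 {y. (x, y) \<in> A}) + M1.integral (\<lambda>x. m2 {y. (x, y) \<in> B})"
      using A B fibre M2.nonneg M2.measure_le_one[OF fibre[of "A \<union> B"]]
      by (intro M1.integral_add) (auto simp: split[symmetric])
    finally show "M1.integral (\<lambda>x. m2 {y. (x, y) \<in> A \<union> B})
        = M1.integral (\<lambda>x. m2 {y. (x, y) \<in> A}) + M1.integral (\<lambda>x. m2 {y. (x, y) \<in> B})" .
  qed
qed

lemma (in group) l_coset_Collect:
  assumes "a \<in> carrier G"
  shows "a <#\<^bsub>G\<^esub> {x\<in>carrier G. P x} = {x\<in>carrier G. P (inv a \<otimes> x)}"
proof (intro equalityI subsetI)
  fix y assume "y \<in> a <#\<^bsub>G\<^esub> {x\<in>carrier G. P x}"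
  then obtain x where "x \<in> carrier G" "P x" "y = a \<otimes> x"
    by (auto simp: l_coset_def)
  then show "y \<in> {x\<in>carrier G. P (inv a \<otimes> x)}"
    using assms by (simp add: m_assoc[symmetric])
next
  fix y assume "y \<in> {x\<in>carrier G. P (inv a \<otimes> x)}"
  then have "inv a \<otimes> y \<in> {x\<in>carrier G. P x}" "y = a \<otimes> (inv a \<otimes> y)"
    using assms by (simp_all add: m_assoc[symmetric])
  then show "y \<in> a <#\<^bsub>G\<^esub> {x\<in>carrier G. P x}"
    unfolding l_coset_def by blast
qed

lemma DirProd_l_coset_fibre:
  assumes G1: "group G1" and "a \<in> carrier G1" "x \<in> carrier G1" "A \<subseteq> carrier (G1 \<times>\<times> G2)"
  shows "{y. (x, y) \<in> (a, b) <#\<^bsub>G1 \<times>\<times> G2\<^esub> A} = b <#\<^bsub>G2\<^esub> {y. (inv\<^bsub>G1\<^esub> a \<otimes>\<^bsub>G1\<^esub> x, y) \<in> A}"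
proof (intro equalityI subsetI)
  interpret G1: group G1 by (rule G1)
  fix y assume "y \<in> {y. (x, y) \<in> (a, b) <#\<^bsub>G1 \<times>\<times> G2\<^esub> A}"
  then obtain x' y' where x'y': "(x', y') \<in> A" "x = a \<otimes>\<^bsub>G1\<^esub> x'" "y = b \<otimes>\<^bsub>G2\<^esub> y'"
    by (auto simp: l_coset_def)
  moreover have "inv\<^bsub>G1\<^esub> a \<otimes>\<^bsub>G1\<^esub> x = x'"
    using assms x'y' by (auto simp: G1.inv_solve_left')
  ultimately show "y \<in> b <#\<^bsub>G2\<^esub> {y. (inv\<^bsub>G1\<^esub> a \<otimes>\<^bsub>G1\<^esub> x, y) \<in> A}"
    by (auto simp: l_coset_def)
next
  interpret G1: group G1 by (rule G1)
  fix y assume "y \<in> b <#\<^bsub>G2\<^esub> {y. (inv\<^bsub>G1\<^esub> a \<otimes>\<^bsub>G1\<^esub> x, y) \<in> A}"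
  then obtain y' where "(inv\<^bsub>G1\<^esub> a \<otimes>\<^bsub>G1\<^esub> x, y') \<in> A" "y = b \<otimes>\<^bsub>G2\<^esub> y'"
    by (auto simp: l_coset_def)
  moreover have "a \<otimes>\<^bsub>G1\<^esub> (inv\<^bsub>G1\<^esub> a \<otimes>\<^bsub>G1\<^esub> x) = x"
    using assms by (simp add: G1.m_assoc[symmetric])
  ultimately show "y \<in> {y. (x, y) \<in> (a, b) <#\<^bsub>G1 \<times>\<times> G2\<^esub> A}"
    by (force simp: l_coset_def)
qed

lemma amenable_iff_invariant_prob:
  "amenable G \<longleftrightarrow> (\<exists>m. finitely_additive_prob (carrier G) m \<and>
     (\<forall>g A. g \<in> carrier G \<longrightarrow> A \<subseteq> carrier G \<longrightarrow> m (g <#\<^bsub>G\<^esub> A) = m A))"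
  unfolding amenable_def finitely_additive_prob_def by simp

lemma amenable_DirProd:
  assumes "group G1" "group G2" "amenable G1" "amenable G2"
  shows "amenable (G1 \<times>\<times> G2)"
proof -
  interpret G1: group G1 by fact
  interpret G2: group G2 by fact
  obtain m1 where m1: "finitely_additive_prob (carrier G1) m1"
    and inv1: "\<And>g A. g \<in> carrier G1 \<Longrightarrow> A \<subseteq> carrier G1 \<Longrightarrow> m1 (g <#\<^bsub>G1\<^esub> A) = m1 A"
    using assms(3) by (auto simp: amenable_iff_invariant_prob)
  obtain m2 where m2: "finitely_additive_prob (carrier G2) m2"
    and inv2: "\<And>g A. g \<in> carrier G2 \<Longrightarrow> A \<subseteq> carrier G2 \<Longrightarrow> m2 (g <#\<^bsub>G2\<^esub> A) = m2 A"
    using assms(4) by (auto simp: amenable_iff_invariant_prob)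
  interpret M1: finitely_additive_prob "carrier G1" m1 by (rule m1)
  have translate: "M1.integral (\<lambda>x. h (inv\<^bsub>G1\<^esub> a \<otimes>\<^bsub>G1\<^esub> x)) = M1.integral h"
    if "a \<in> carrier G1" for a h
  proof (rule M1.integral_equimeasurable)
    fix t
    have "{x\<in>carrier G1. t \<le> h (inv\<^bsub>G1\<^esub> a \<otimes>\<^bsub>G1\<^esub> x)} = a <#\<^bsub>G1\<^esub> {x\<in>carrier G1. t \<le> h x}"
      using G1.l_coset_Collect[OF that, of "\<lambda>x. t \<le> h x"] by simp
    then show "m1 {x\<in>carrier G1. t \<le> h (inv\<^bsub>G1\<^esub> a \<otimes>\<^bsub>G1\<^esub> x)} = m1 {x\<in>carrier G1. t \<le> h x}"
      using inv1 that by simp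
  qed
  show ?thesis
    unfolding amenable_iff_invariant_prob
  proof (intro exI conjI allI impI)
    show "finitely_additive_prob (carrier (G1 \<times>\<times> G2)) (\<lambda>A. M1.integral (\<lambda>x. m2 {y. (x, y) \<in> A}))"
      using finitely_additive_prob_prod[OF m1 m2] by simp
  next
    fix g A assume g: "g \<in> carrier (G1 \<times>\<times> G2)" and A: "A \<subseteq> carrier (G1 \<times>\<times> G2)"
    then obtain a b where ab: "g = (a, b)" "a \<in> carrier G1" "b \<in> carrier G2"
      by auto
    have "M1.integral (\<lambda>x. m2 {y. (x, y) \<in> g <#\<^bsub>G1 \<times>\<times> G2\<^esub> A})
        = M1.integral (\<lambda>x. m2 {y. (inv\<^bsub>G1\<^esub> a \<otimes>\<^bsub>G1\<^esub> x, y) \<in> A})"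
      using A ab by (intro M1.integral_cong) (auto simp: DirProd_l_coset_fibre[OF assms(1)] intro!: inv2)
    also have "\<dots> = M1.integral (\<lambda>x. m2 {y. (x, y) \<in> A})"
      by (rule translate[OF ab(2)])
    finally show "M1.integral (\<lambda>x. m2 {y. (x, y) \<in> g <#\<^bsub>G1 \<times>\<times> G2\<^esub> A})
        = M1.integral (\<lambda>x. m2 {y. (x, y) \<in> A})" .
  qed
qed

section \<open>Direct products of relatively sofic pairs\<close>

definition amenable_in_sofic :: "'a set \<Rightarrow> ('a, 'b) monoid_scheme \<Rightarrow> bool" where
  "amenable_in_sofic H G \<longleftrightarrow> group G \<and> subgroup H G \<and> sofic G \<and> amenable (G\<lparr>carrier := H\<rparr>)"

lemma amenable_in_sofic_DirProd:
  assumes "amenable_in_sofic H1 G1" and "amenable_in_sofic H2 G2"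
  shows "amenable_in_sofic (H1 \<times> H2) (G1 \<times>\<times> G2)"
proof -
  from assms have G: "group G1" "group G2" and H: "subgroup H1 G1" "subgroup H2 G2"
    and sofic: "sofic G1" "sofic G2"
    and amenable: "amenable (G1\<lparr>carrier := H1\<rparr>)" "amenable (G2\<lparr>carrier := H2\<rparr>)"
    by (simp_all add: amenable_in_sofic_def)
  have "(G1 \<times>\<times> G2)\<lparr>carrier := H1 \<times> H2\<rparr> = G1\<lparr>carrier := H1\<rparr> \<times>\<times> G2\<lparr>carrier := H2\<rparr>"
    by (simp add: DirProd_def)
  moreover have "amenable (G1\<lparr>carrier := H1\<rparr> \<times>\<times> G2\<lparr>carrier := H2\<rparr>)"
    using subgroup.subgroup_is_group[OF H(1) G(1)] subgroup.subgroup_is_group[OF H(2) G(2)] amenable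
    by (rule amenable_DirProd)
  ultimately show ?thesis
    using G H sofic
    by (simp add: amenable_in_sofic_def DirProd_group DirProd_subgroups sofic_DirProd group.is_monoid)
qed

lemma rel_sofic_over_iff_lift:
  assumes G: "monoid G" and H: "H \<subseteq> carrier G" and K: "group K"
  shows "rel_sofic_over TYPE('c) H G K \<longleftrightarrow>
    (\<exists>(Gs :: nat \<Rightarrow> 'c monoid) Hs U r. (\<forall>i. amenable_in_sofic (Hs i) (Gs i)) \<and> free_ultrafilter U \<and>
       rel_embedding_lift U (\<lambda>i. Gs i \<times>\<times> K) (\<lambda>i. Hs i \<times> carrier K) G H r)"
proof -
  have "rel_sofic_over TYPE('c) H G K \<longleftrightarrow>
    (\<exists>(Gs :: nat \<Rightarrow> 'c monoid) Hs U. (\<forall>i. amenable_in_sofic (Hs i) (Gs i)) \<and> free_ultrafilter U \<and>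
       (\<exists>\<pi>. \<pi> \<in> hom G (ultraprod U (\<lambda>i. Gs i \<times>\<times> K)) \<and> inj_on \<pi> (carrier G) \<and>
          \<pi> ` carrier G \<inter> ultrasub U (\<lambda>i. Gs i \<times>\<times> K) (\<lambda>i. Hs i \<times> carrier K) = \<pi> ` H))"
    by (simp add: rel_sofic_over_def amenable_in_sofic_def)
  also have "\<dots> \<longleftrightarrow>
    (\<exists>(Gs :: nat \<Rightarrow> 'c monoid) Hs U. (\<forall>i. amenable_in_sofic (Hs i) (Gs i)) \<and> free_ultrafilter U \<and>
       (\<exists>r. rel_embedding_lift U (\<lambda>i. Gs i \<times>\<times> K) (\<lambda>i. Hs i \<times> carrier K) G H r))"
  proof (intro ex_cong1 conj_cong refl)
    fix Gs :: "nat \<Rightarrow> 'c monoid" and Hs U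
    assume Gs: "\<forall>i. amenable_in_sofic (Hs i) (Gs i)" and U: "free_ultrafilter U"
    have L: "group (Gs i \<times>\<times> K)" and "subgroup (Hs i) (Gs i)" for i
      using Gs K by (simp_all add: amenable_in_sofic_def DirProd_group)
    then have S: "Hs i \<times> carrier K \<subseteq> carrier (Gs i \<times>\<times> K)" "\<one>\<^bsub>Gs i \<times>\<times> K\<^esub> \<in> Hs i \<times> carrier K" for i
      using subgroup.subset subgroup.one_closed monoid.one_closed[OF group.is_monoid[OF K]] by fastforce+
    show "(\<exists>\<pi>. \<pi> \<in> hom G (ultraprod U (\<lambda>i. Gs i \<times>\<times> K)) \<and> inj_on \<pi> (carrier G) \<and>
          \<pi> ` carrier G \<inter> ultrasub U (\<lambda>i. Gs i \<times>\<times> K) (\<lambda>i. Hs i \<times> carrier K) = \<pi> ` H)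
      \<longleftrightarrow> (\<exists>r. rel_embedding_lift U (\<lambda>i. Gs i \<times>\<times> K) (\<lambda>i. Hs i \<times> carrier K) G H r)"
      by (rule ex_embedding_iff_ex_rel_embedding_lift[OF U L S G H])
  qed
  finally show ?thesis
    by simp
qed

theorem proposition2p9:
  fixes G1 :: "'a1 monoid" and G2 :: "'a2 monoid"
    and K1 :: "'k1 monoid" and K2 :: "'k2 monoid"
    and H1 :: "'a1 set" and H2 :: "'a2 set"
  assumes "group G1" "subgroup H1 G1" "group G2" "subgroup H2 G2"
    and "group K1" "group K2"
    and "rel_sofic_over TYPE('c1) H1 G1 K1"
    and "rel_sofic_over TYPE('c2) H2 G2 K2"
  shows "rel_sofic_over TYPE('c1 \<times> 'c2) (H1 \<times> H2) (G1 \<times>\<times> G2) (K1 \<times>\<times> K2)"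
proof -
  have G: "monoid G1" "monoid G2" and H: "H1 \<subseteq> carrier G1" "H2 \<subseteq> carrier G2"
    using assms(1-4) by (simp_all add: group.is_monoid subgroup.subset)
  then have H12: "H1 \<times> H2 \<subseteq> carrier (G1 \<times>\<times> G2)"
    by auto
  obtain Gs1 :: "nat \<Rightarrow> 'c1 monoid" and Hs1 U1 r1 where Gs1: "\<forall>i. amenable_in_sofic (Hs1 i) (Gs1 i)"
    and U1: "free_ultrafilter U1" and r1: "rel_embedding_lift U1 (\<lambda>i. Gs1 i \<times>\<times> K1) (\<lambda>i. Hs1 i \<times> carrier K1) G1 H1 r1"
    using assms(7) rel_sofic_over_iff_lift[OF G(1) H(1) assms(5)] by blast
  obtain Gs2 :: "nat \<Rightarrow> 'c2 monoid" and Hs2 U2 r2 where Gs2: "\<forall>i. amenable_in_sofic (Hs2 i) (Gs2 i)"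
    and U2: "free_ultrafilter U2" and r2: "rel_embedding_lift U2 (\<lambda>i. Gs2 i \<times>\<times> K2) (\<lambda>i. Hs2 i \<times> carrier K2) G2 H2 r2"
    using assms(8) rel_sofic_over_iff_lift[OF G(2) H(2) assms(6)] by blast
  show ?thesis
    unfolding rel_sofic_over_iff_lift[OF DirProd_monoid[OF G] H12 DirProd_group[OF assms(5,6)]]
  proof (intro exI conjI allI)
    show "amenable_in_sofic (Hs1 (fst (prod_decode n)) \<times> Hs2 (snd (prod_decode n)))
        (Gs1 (fst (prod_decode n)) \<times>\<times> Gs2 (snd (prod_decode n)))" for n
      using Gs1 Gs2 by (simp add: amenable_in_sofic_DirProd)
  qed (rule free_ultrafilter_prod[OF U1 U2], rule rel_embedding_lift_DirProd[OF U1 U2 r1 r2])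
qed

end
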